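(* Let $\{1\}\to F\xrightarrow{\iota}G\xrightarrow{\pi}H\to\{1\}$ be a split exact sequence of groups with splitting $\sigma:H\to G$, and let $\Theta:H\to\mathrm{Aut}(F)$, $\Theta_h(x)=\iota^{-1}(\sigma(h)\iota(x)\sigma(h)^{-1})$. Then: (a) the composition $\Phi:\mathbf{k}F\otimes\mathbf{k}H\xrightarrow{\mathbf{k}\iota\otimes\mathbf{k}\sigma}\mathbf{k}G\otimes\mathbf{k}G\xrightarrow{\text{mult}}\mathbf{k}G$ is an isomorphism of left $\mathbf{k}F$-modules; (b) if $\Theta_h^{\mathrm{ab}}=\mathrm{id}_{F^{\mathrm{ab}}}$ for every $h\in H$, then for every $n\ge0$, $\Phi$ restricts to an isomorphism of left $\mathbf{k}F$-modules $\sum_{a+b=n}I_F^a\otimes I_H^b\xrightarrow{\sim}I_G^n$ (sum over $a,b\ge0$, inside $\mathbf{k}F\otimes\mathbf{k}H$).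
   Context: $\mathbf{k}$ is a commutative $\mathbb{Q}$-algebra. For a group $G$, $\mathbf{k}G$ is its group algebra, $I_G$ its augmentation ideal (spanned by $g-1$), $I_G^0=\mathbf{k}G$. $\Theta_h^{\mathrm{ab}}$ is the automorphism of the abelianization $F^{\mathrm{ab}}$ induced by $\Theta_h$. *)

theory Defs
  imports "HOL-Algebra.Algebra"
begin

definition Q_algebra :: "'k::comm_ring_1 itself \<Rightarrow> bool" where
  "Q_algebra _ \<longleftrightarrow> (\<forall>n::nat. n > 0 \<longrightarrow> (\<exists>y::'k. of_nat n * y = 1))"

text \<open>Finitely supported k-valued functions with support in A (free k-module on A).\<close>
definition fsupp_on :: "'a set \<Rightarrow> ('a \<Rightarrow> 'k::zero) set" where
  "fsupp_on A = {c. finite {x. c x \<noteq> 0} \<and> {x. c x \<noteq> 0} \<subseteq> A}"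

definition grp_alg :: "('g, 'b) monoid_scheme \<Rightarrow> ('g \<Rightarrow> 'k::zero) set" where
  "grp_alg G = fsupp_on (carrier G)"

definition delta :: "'a \<Rightarrow> 'a \<Rightarrow> 'k::{zero,one}" where
  "delta g = (\<lambda>x. if x = g then 1 else 0)"

definition conv :: "('g, 'b) monoid_scheme \<Rightarrow> ('g \<Rightarrow> 'k::comm_ring_1) \<Rightarrow> ('g \<Rightarrow> 'k) \<Rightarrow> 'g \<Rightarrow> 'k" where
  "conv G a b = (\<lambda>g. \<Sum>p \<in> {(x, y). x \<in> carrier G \<and> y \<in> carrier G \<and> x \<otimes>\<^bsub>G\<^esub> y = g
                                  \<and> a x \<noteq> 0 \<and> b y \<noteq> 0}. a (fst p) * b (snd p))"

inductive_set kspan :: "('a \<Rightarrow> 'k::comm_ring_1) set \<Rightarrow> ('a \<Rightarrow> 'k) set" for S where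
  zero: "(\<lambda>_. 0) \<in> kspan S"
| add: "x \<in> S \<Longrightarrow> y \<in> kspan S \<Longrightarrow> (\<lambda>i. c * x i + y i) \<in> kspan S"

definition aug_ideal :: "('g, 'b) monoid_scheme \<Rightarrow> ('g \<Rightarrow> 'k::comm_ring_1) set" where
  "aug_ideal G = kspan {(\<lambda>x. delta g x - delta \<one>\<^bsub>G\<^esub> x) | g. g \<in> carrier G}"

fun aug_pow :: "('g, 'b) monoid_scheme \<Rightarrow> nat \<Rightarrow> ('g \<Rightarrow> 'k::comm_ring_1) set" where
  "aug_pow G 0 = grp_alg G"
| "aug_pow G (Suc n) = kspan {conv G a b | a b. a \<in> aug_pow G n \<and> b \<in> aug_ideal G}"

text \<open>kF \<otimes> kH is modelled as the free k-module on carrier F \<times> carrier H;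
  the elementary tensor a \<otimes> b is (x,y) \<mapsto> a x * b y.\<close>
definition tens :: "('f \<Rightarrow> 'k::comm_ring_1) \<Rightarrow> ('h \<Rightarrow> 'k) \<Rightarrow> ('f \<times> 'h \<Rightarrow> 'k)" where
  "tens a b = (\<lambda>(x, y). a x * b y)"

definition tens_space :: "('f, 'b) monoid_scheme \<Rightarrow> ('h, 'c) monoid_scheme \<Rightarrow> ('f \<times> 'h \<Rightarrow> 'k::zero) set" where
  "tens_space F H = fsupp_on (carrier F \<times> carrier H)"

definition tens_lact :: "('f, 'b) monoid_scheme \<Rightarrow> ('f \<Rightarrow> 'k::comm_ring_1) \<Rightarrow> ('f \<times> 'h \<Rightarrow> 'k) \<Rightarrow> ('f \<times> 'h \<Rightarrow> 'k)" where
  "tens_lact F a c = (\<lambda>(x, y). conv F a (\<lambda>z. c (z, y)) x)"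

definition alg_map :: "('f, 'b) monoid_scheme \<Rightarrow> ('f \<Rightarrow> 'g) \<Rightarrow> ('f \<Rightarrow> 'k::comm_ring_1) \<Rightarrow> ('g \<Rightarrow> 'k)" where
  "alg_map F f a = (\<lambda>g. \<Sum>x \<in> {x. x \<in> carrier F \<and> f x = g \<and> a x \<noteq> 0}. a x)"

text \<open>\<Phi> = mult \<circ> (k\<iota> \<otimes> k\<sigma>), the k-linear map sending x \<otimes> h to \<iota>(x)\<sigma>(h).\<close>
definition Phi :: "('f, 'b) monoid_scheme \<Rightarrow> ('h, 'c) monoid_scheme \<Rightarrow> ('g, 'd) monoid_scheme
    \<Rightarrow> ('f \<Rightarrow> 'g) \<Rightarrow> ('h \<Rightarrow> 'g) \<Rightarrow> ('f \<times> 'h \<Rightarrow> 'k::comm_ring_1) \<Rightarrow> ('g \<Rightarrow> 'k)" where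
  "Phi F H G \<iota> \<sigma> c = (\<lambda>g. \<Sum>p \<in> {(x, y). x \<in> carrier F \<and> y \<in> carrier H
                          \<and> \<iota> x \<otimes>\<^bsub>G\<^esub> \<sigma> y = g \<and> c (x, y) \<noteq> 0}. c p)"

definition Theta :: "('f, 'b) monoid_scheme \<Rightarrow> ('g, 'd) monoid_scheme
    \<Rightarrow> ('f \<Rightarrow> 'g) \<Rightarrow> ('h \<Rightarrow> 'g) \<Rightarrow> 'h \<Rightarrow> 'f \<Rightarrow> 'f" where
  "Theta F G \<iota> \<sigma> h x = the_inv_into (carrier F) \<iota> (\<sigma> h \<otimes>\<^bsub>G\<^esub> \<iota> x \<otimes>\<^bsub>G\<^esub> inv\<^bsub>G\<^esub> (\<sigma> h))"

text \<open>The map induced by \<Theta>_h on F^ab = F Mod [F,F] is the identity: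
  it sends the coset [F,F] x to [F,F] \<Theta>_h(x).\<close>
definition Theta_ab_id :: "('f, 'b) monoid_scheme \<Rightarrow> ('g, 'd) monoid_scheme
    \<Rightarrow> ('f \<Rightarrow> 'g) \<Rightarrow> ('h \<Rightarrow> 'g) \<Rightarrow> 'h \<Rightarrow> bool" where
  "Theta_ab_id F G \<iota> \<sigma> h \<longleftrightarrow>
     (\<forall>x \<in> carrier F. derived F (carrier F) #>\<^bsub>F\<^esub> Theta F G \<iota> \<sigma> h x
                    = derived F (carrier F) #>\<^bsub>F\<^esub> x)"

end

theory Submission
  imports Defs
begin

(* Every g \<in> G factors uniquely as \<iota>(x) \<sigma>(h), so \<Phi> maps the basis of kF \<otimes> kH bijectively onto
   the basis G of kG; it is kF-linear because the action on the first factor becomes left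
   multiplication by \<iota>.

   For (b), let M_n be the image of the n-th filtration piece, spanned by the products \<iota>(x) \<sigma>(y)
   with x \<in> I_F^a, y \<in> I_H^b, a + b = n. Clearly M_n \<subseteq> I_G^n; the converse follows by induction
   from M_n I_G \<subseteq> M_(n+1). Since \<iota>(f)\<sigma>(h) - 1 = (\<iota>(f) - 1) \<sigma>(h) + (\<sigma>(h) - 1), this amounts to
   moving \<iota>(z) to the left past \<sigma>(y), by means of
     (\<sigma>(h) - 1) \<iota>(z) = \<iota>(\<Theta>_h z) (\<sigma>(h) - 1) + \<iota>(\<Theta>_h z - z).
   The hypothesis on \<Theta>^ab says that \<Theta>_h(x) x^-1 lies in [F, F], and c - 1 \<in> I_F^2 for every
   commutator c; hence \<Theta>_h - id raises the I_F-adic degree by one, so the error term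
   \<iota>(\<Theta>_h z - z) has higher F-degree and an induction on the H-degree goes through. *)

section \<open>Spans and linear maps of finitely supported functions\<close>

abbreviation lincomb :: "'k::comm_ring_1 \<Rightarrow> ('a \<Rightarrow> 'k) \<Rightarrow> ('a \<Rightarrow> 'k) \<Rightarrow> 'a \<Rightarrow> 'k" where
  "lincomb c u v \<equiv> (\<lambda>i. c * u i + v i)"

definition k_subspace :: "('a \<Rightarrow> 'k::comm_ring_1) set \<Rightarrow> bool" where
  "k_subspace V \<longleftrightarrow> (\<lambda>_. 0) \<in> V \<and> (\<forall>c u v. u \<in> V \<longrightarrow> v \<in> V \<longrightarrow> lincomb c u v \<in> V)"

definition k_linear_on :: "('a \<Rightarrow> 'k::comm_ring_1) set \<Rightarrow> (('a \<Rightarrow> 'k) \<Rightarrow> 'b \<Rightarrow> 'k) \<Rightarrow> bool" where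
  "k_linear_on V f \<longleftrightarrow> (\<forall>u\<in>V. \<forall>v\<in>V. \<forall>c. f (lincomb c u v) = lincomb c (f u) (f v))"

lemma k_subspace_zero: "k_subspace V \<Longrightarrow> (\<lambda>_. 0) \<in> V"
  by (simp add: k_subspace_def)

lemma k_subspace_lincomb: "k_subspace V \<Longrightarrow> u \<in> V \<Longrightarrow> v \<in> V \<Longrightarrow> lincomb c u v \<in> V"
  by (simp add: k_subspace_def)

lemma k_subspace_add: "k_subspace V \<Longrightarrow> u \<in> V \<Longrightarrow> v \<in> V \<Longrightarrow> (\<lambda>i. u i + v i) \<in> V"
  using k_subspace_lincomb[of V u v 1] by simp

lemma k_subspace_diff: "k_subspace V \<Longrightarrow> u \<in> V \<Longrightarrow> v \<in> V \<Longrightarrow> (\<lambda>i. u i - v i) \<in> V"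
  using k_subspace_lincomb[of V v u "-1"] by simp

lemma k_linear_onI:
  "(\<And>u v c. u \<in> V \<Longrightarrow> v \<in> V \<Longrightarrow> f (lincomb c u v) = lincomb c (f u) (f v)) \<Longrightarrow> k_linear_on V f"
  unfolding k_linear_on_def by blast

lemma k_linear_onD:
  "k_linear_on V f \<Longrightarrow> u \<in> V \<Longrightarrow> v \<in> V \<Longrightarrow> f (lincomb c u v) = lincomb c (f u) (f v)"
  unfolding k_linear_on_def by blast

lemma k_linear_on_zero: "k_linear_on V f \<Longrightarrow> (\<lambda>_. 0) \<in> V \<Longrightarrow> f (\<lambda>_. 0) = (\<lambda>_. 0)"
  using k_linear_onD[of V f "\<lambda>_. 0" "\<lambda>_. 0" "-1"] by simp

lemma k_linear_on_comp:
  assumes "k_linear_on V f" "\<And>v. v \<in> V \<Longrightarrow> f v \<in> W" "k_linear_on W g"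
  shows "k_linear_on V (\<lambda>v. g (f v))"
  using assms by (intro k_linear_onI) (simp add: k_linear_onD)

lemma k_linear_on_id: "k_linear_on V (\<lambda>u. u)"
  by (rule k_linear_onI) (rule refl)

lemma k_linear_on_diff:
  assumes f: "k_linear_on V f" and g: "k_linear_on V g"
  shows "k_linear_on V (\<lambda>u i. f u i - g u i)"
proof (rule k_linear_onI)
  fix u v c assume "u \<in> V" "v \<in> V"
  then show "(\<lambda>i. f (lincomb c u v) i - g (lincomb c u v) i)
      = lincomb c (\<lambda>i. f u i - g u i) (\<lambda>i. f v i - g v i)"
    by (simp only: k_linear_onD[OF f] k_linear_onD[OF g]) (simp add: algebra_simps)
qed

lemma kspan_lincomb: "u \<in> kspan S \<Longrightarrow> v \<in> kspan S \<Longrightarrow> lincomb c u v \<in> kspan S"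
proof (induction u rule: kspan.induct)
  case zero
  then show ?case by simp
next
  case (add x y d)
  have "lincomb c (lincomb d x y) v = lincomb (c * d) x (lincomb c y v)"
    by (simp add: algebra_simps)
  then show ?case using add by (simp add: kspan.add)
qed

lemma k_subspace_kspan: "k_subspace (kspan S)"
  by (simp add: k_subspace_def kspan.zero kspan_lincomb)

lemma kspan_superset: "x \<in> S \<Longrightarrow> x \<in> kspan S"
  using kspan.add[OF _ kspan.zero, of x S 1] by simp

lemma kspan_minimal: "k_subspace V \<Longrightarrow> S \<subseteq> V \<Longrightarrow> kspan S \<subseteq> V"
proof
  fix u assume V: "k_subspace V" "S \<subseteq> V" and "u \<in> kspan S"
  from \<open>u \<in> kspan S\<close> show "u \<in> V"
    by (induction u rule: kspan.induct) (use V in \<open>auto simp: k_subspace_zero k_subspace_lincomb\<close>)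
qed

lemma kspan_linear_into:
  assumes f: "k_linear_on V f" and S: "kspan S \<subseteq> V" and W: "k_subspace W"
    and gen: "\<And>x. x \<in> S \<Longrightarrow> f x \<in> W" and u: "u \<in> kspan S"
  shows "f u \<in> W"
  using u
proof (induction u rule: kspan.induct)
  case zero
  have "(\<lambda>_. 0) \<in> V" using S kspan.zero by blast
  then show ?case using k_linear_on_zero[OF f] k_subspace_zero[OF W] by simp
next
  case (add x y c)
  have "x \<in> V" "y \<in> V" using add.hyps S kspan_superset by blast+
  then have "f (lincomb c x y) = lincomb c (f x) (f y)" by (rule k_linear_onD[OF f])
  then show ?case using add gen k_subspace_lincomb[OF W] by simp
qed

lemma kspan_linear_image:
  assumes f: "k_linear_on V f" and S: "kspan S \<subseteq> V"
  shows "f ` kspan S = kspan (f ` S)"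
proof
  show "f ` kspan S \<subseteq> kspan (f ` S)"
  proof
    fix w assume "w \<in> f ` kspan S"
    then obtain u where "u \<in> kspan S" "w = f u" by blast
    moreover have "f x \<in> kspan (f ` S)" if "x \<in> S" for x
      using that by (intro kspan_superset) simp
    ultimately show "w \<in> kspan (f ` S)"
      using kspan_linear_into[OF f S k_subspace_kspan] by simp
  qed
next
  show "kspan (f ` S) \<subseteq> f ` kspan S"
  proof
    fix w assume "w \<in> kspan (f ` S)"
    then show "w \<in> f ` kspan S"
    proof (induction w rule: kspan.induct)
      case zero
      have "(\<lambda>_. 0) \<in> V" using S kspan.zero by blast
      then have "f (\<lambda>_. 0) = (\<lambda>_. 0)" by (rule k_linear_on_zero[OF f])
      then show ?case using kspan.zero[of S] by force
    next
      case (add x y c)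
      then obtain x0 y0 where xy: "x0 \<in> S" "x = f x0" "y0 \<in> kspan S" "y = f y0" by auto
      then have "lincomb c x0 y0 \<in> kspan S" using kspan_lincomb kspan_superset by blast
      moreover have "x0 \<in> V" "y0 \<in> V" using xy S kspan_superset by blast+
      then have "f (lincomb c x0 y0) = lincomb c x y" using xy by (simp add: k_linear_onD[OF f])
      ultimately show ?case by force
    qed
  qed
qed

lemma k_subspace_fsupp: "k_subspace (fsupp_on A :: ('a \<Rightarrow> 'k::comm_ring_1) set)"
  unfolding k_subspace_def
proof (intro conjI allI impI)
  fix c :: 'k and u v :: "'a \<Rightarrow> 'k"
  assume "u \<in> fsupp_on A" "v \<in> fsupp_on A"
  moreover have "{i. c * u i + v i \<noteq> 0} \<subseteq> {i. u i \<noteq> 0} \<union> {i. v i \<noteq> 0}" by auto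
  ultimately show "lincomb c u v \<in> fsupp_on A"
    unfolding fsupp_on_def by (auto dest: finite_subset)
qed (simp add: fsupp_on_def)

lemma delta_fsupp: "x \<in> A \<Longrightarrow> (delta x :: 'a \<Rightarrow> 'k::comm_ring_1) \<in> fsupp_on A"
proof -
  assume "x \<in> A"
  moreover have "{i. (delta x i :: 'k) \<noteq> 0} = {x}" by (auto simp: delta_def)
  ultimately show ?thesis unfolding fsupp_on_def by simp
qed

lemma fsupp_subset_kspan_delta:
  fixes c :: "'a \<Rightarrow> 'k::comm_ring_1"
  assumes "finite B" "{i. c i \<noteq> 0} \<subseteq> B" "{i. c i \<noteq> 0} \<subseteq> A"
  shows "c \<in> kspan {delta a | a. a \<in> A}"
  using assms
proof (induction B arbitrary: c rule: finite_induct)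
  case empty
  then have "c = (\<lambda>_. 0)" by auto
  then show ?case by (simp add: kspan.zero)
next
  case (insert a B)
  have rest: "c(a := 0) \<in> kspan {delta a | a. a \<in> A}"
    using insert by (intro insert.IH) auto
  show ?case
  proof (cases "c a = 0")
    case True
    then have "c(a := 0) = c" by auto
    then show ?thesis using rest by simp
  next
    case False
    then have "delta a \<in> {delta a | a. a \<in> A}" using insert.prems by blast
    then have "lincomb (c a) (delta a) (c(a := 0)) \<in> kspan {delta a | a. a \<in> A}"
      by (rule kspan.add[OF _ rest])
    moreover have "lincomb (c a) (delta a) (c(a := 0)) = c"
      by (simp add: delta_def fun_eq_iff)
    ultimately show ?thesis by simp
  qed
qed

lemma fsupp_eq_kspan_delta:
  "(fsupp_on A :: ('a \<Rightarrow> 'k::comm_ring_1) set) = kspan {delta a | a. a \<in> A}"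
proof (rule equalityI; rule subsetI)
  fix c :: "'a \<Rightarrow> 'k" assume c: "c \<in> fsupp_on A"
  show "c \<in> kspan {delta a | a. a \<in> A}"
    by (rule fsupp_subset_kspan_delta[of "{i. c i \<noteq> 0}"]) (use c in \<open>simp_all add: fsupp_on_def\<close>)
next
  have "{delta a | a. a \<in> A} \<subseteq> (fsupp_on A :: ('a \<Rightarrow> 'k) set)"
    using delta_fsupp by auto
  then have "kspan {delta a | a. a \<in> A} \<subseteq> (fsupp_on A :: ('a \<Rightarrow> 'k) set)"
    by (rule kspan_minimal[OF k_subspace_fsupp])
  then show "c \<in> fsupp_on A" if "c \<in> kspan {delta a | a. a \<in> A}" for c :: "'a \<Rightarrow> 'k"
    using that by blast
qed

lemma fsupp_linear_into:
  assumes f: "k_linear_on (fsupp_on A) f" and W: "k_subspace W"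
    and gen: "\<And>x. x \<in> A \<Longrightarrow> f (delta x) \<in> W" and u: "u \<in> fsupp_on A"
  shows "f u \<in> W"
proof (rule kspan_linear_into[OF f _ W])
  show "kspan {delta a | a. a \<in> A} \<subseteq> fsupp_on A"
    unfolding fsupp_eq_kspan_delta ..
  show "u \<in> kspan {delta a | a. a \<in> A}"
    using u unfolding fsupp_eq_kspan_delta .
qed (use gen in blast)

lemma linear_eq_on_fsupp:
  fixes f g :: "('a \<Rightarrow> 'k::comm_ring_1) \<Rightarrow> 'b \<Rightarrow> 'k"
  assumes f: "k_linear_on (fsupp_on A) f" and g: "k_linear_on (fsupp_on A) g"
    and eq: "\<And>x. x \<in> A \<Longrightarrow> f (delta x) = g (delta x)" and u: "u \<in> fsupp_on A"
  shows "f u = g u"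
proof -
  have "k_linear_on (fsupp_on A) (\<lambda>u i. f u i - g u i)"
    by (rule k_linear_on_diff[OF f g])
  moreover have "k_subspace {(\<lambda>_. 0) :: 'b \<Rightarrow> 'k}"
    by (simp add: k_subspace_def)
  moreover have "(\<lambda>i. f (delta x) i - g (delta x) i) \<in> {\<lambda>_. 0}" if "x \<in> A" for x
    using eq[OF that] by simp
  ultimately have "(\<lambda>i. f u i - g u i) \<in> {\<lambda>_. 0}"
    using u by (rule fsupp_linear_into)
  then show ?thesis by (simp add: fun_eq_iff)
qed

lemma bilinear_eq_on_fsupp:
  fixes f g :: "('a \<Rightarrow> 'k::comm_ring_1) \<Rightarrow> ('b \<Rightarrow> 'k) \<Rightarrow> 'c \<Rightarrow> 'k"
  assumes u: "u \<in> fsupp_on A" and v: "v \<in> fsupp_on B"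
    and f1: "\<And>v. v \<in> fsupp_on B \<Longrightarrow> k_linear_on (fsupp_on A) (\<lambda>u. f u v)"
    and g1: "\<And>v. v \<in> fsupp_on B \<Longrightarrow> k_linear_on (fsupp_on A) (\<lambda>u. g u v)"
    and f2: "\<And>u. u \<in> fsupp_on A \<Longrightarrow> k_linear_on (fsupp_on B) (f u)"
    and g2: "\<And>u. u \<in> fsupp_on A \<Longrightarrow> k_linear_on (fsupp_on B) (g u)"
    and eq: "\<And>x y. x \<in> A \<Longrightarrow> y \<in> B \<Longrightarrow> f (delta x) (delta y) = g (delta x) (delta y)"
  shows "f u v = g u v"
proof (rule linear_eq_on_fsupp[OF f1[OF v] g1[OF v] _ u])
  fix x assume x: "x \<in> A"
  show "f (delta x) v = g (delta x) v"
    by (rule linear_eq_on_fsupp[OF f2 g2 eq[OF x] v]) (use delta_fsupp[OF x] in simp_all)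
qed

section \<open>Group algebras\<close>

abbreviation delta_diff :: "'a \<Rightarrow> 'a \<Rightarrow> 'a \<Rightarrow> 'k::comm_ring_1" where
  "delta_diff x y \<equiv> (\<lambda>i. delta x i - delta y i)"

lemma grp_alg_finite_support: "a \<in> grp_alg G \<Longrightarrow> finite {x. a x \<noteq> 0}"
  unfolding grp_alg_def fsupp_on_def by auto

lemma grp_alg_support: "a \<in> grp_alg G \<Longrightarrow> a x \<noteq> 0 \<Longrightarrow> x \<in> carrier G"
  unfolding grp_alg_def fsupp_on_def by auto

lemma k_subspace_grp_alg: "k_subspace (grp_alg G :: ('a \<Rightarrow> 'k::comm_ring_1) set)"
  unfolding grp_alg_def by (rule k_subspace_fsupp)

lemma delta_grp_alg: "x \<in> carrier G \<Longrightarrow> (delta x :: 'a \<Rightarrow> 'k::comm_ring_1) \<in> grp_alg G"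
  unfolding grp_alg_def by (rule delta_fsupp)

lemma delta_diff_grp_alg:
  "x \<in> carrier G \<Longrightarrow> y \<in> carrier G \<Longrightarrow> (delta_diff x y :: 'a \<Rightarrow> 'k::comm_ring_1) \<in> grp_alg G"
  by (intro k_subspace_diff[OF k_subspace_grp_alg] delta_grp_alg)

lemma grp_alg_linear_into:
  assumes "k_linear_on (grp_alg G) f" "k_subspace W" "\<And>x. x \<in> carrier G \<Longrightarrow> f (delta x) \<in> W"
    "u \<in> grp_alg G"
  shows "f u \<in> W"
  using assms unfolding grp_alg_def by (rule fsupp_linear_into[where f = f])

lemma linear_eq_on_grp_alg:
  assumes "k_linear_on (grp_alg G) f" "k_linear_on (grp_alg G) g"
    "\<And>x. x \<in> carrier G \<Longrightarrow> f (delta x) = g (delta x)" "u \<in> grp_alg G"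
  shows "f u = g u"
  using assms unfolding grp_alg_def by (rule linear_eq_on_fsupp[where f = f and g = g])

lemma bilinear_eq_on_grp_alg:
  fixes f g :: "('a \<Rightarrow> 'k::comm_ring_1) \<Rightarrow> ('b \<Rightarrow> 'k) \<Rightarrow> 'c \<Rightarrow> 'k"
  assumes "u \<in> grp_alg G" "v \<in> grp_alg H"
    and "\<And>v. v \<in> grp_alg H \<Longrightarrow> k_linear_on (grp_alg G) (\<lambda>u. f u v)"
    and "\<And>v. v \<in> grp_alg H \<Longrightarrow> k_linear_on (grp_alg G) (\<lambda>u. g u v)"
    and "\<And>u. u \<in> grp_alg G \<Longrightarrow> k_linear_on (grp_alg H) (f u)"
    and "\<And>u. u \<in> grp_alg G \<Longrightarrow> k_linear_on (grp_alg H) (g u)"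
    and "\<And>x y. x \<in> carrier G \<Longrightarrow> y \<in> carrier H \<Longrightarrow> f (delta x) (delta y) = g (delta x) (delta y)"
  shows "f u v = g u v"
  using assms unfolding grp_alg_def by (rule bilinear_eq_on_fsupp[where f = f and g = g])

context group
begin

lemma inv_mult_cancel_left: "x \<in> carrier G \<Longrightarrow> y \<in> carrier G \<Longrightarrow> inv x \<otimes> (x \<otimes> y) = y"
  by (simp add: m_assoc[symmetric])

lemma conv_eq_sum:
  fixes a b :: "'a \<Rightarrow> 'k::comm_ring_1"
  assumes a: "a \<in> grp_alg G" and A: "finite A" "{x. a x \<noteq> 0} \<subseteq> A"
  shows "conv G a b g = (if g \<in> carrier G then \<Sum>x\<in>A. a x * b (inv x \<otimes> g) else 0)"
proof (cases "g \<in> carrier G")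
  case False
  then have "{(x, y). x \<in> carrier G \<and> y \<in> carrier G \<and> x \<otimes> y = g \<and> a x \<noteq> 0 \<and> b y \<noteq> 0} = {}"
    by blast
  then show ?thesis using False unfolding conv_def by (simp only: sum.empty if_False)
next
  case True
  define T where "T = {x. a x \<noteq> 0 \<and> b (inv x \<otimes> g) \<noteq> 0}"
  have supp: "{x. a x \<noteq> 0} \<subseteq> carrier G" using grp_alg_support[OF a] by blast
  have "{(x, y). x \<in> carrier G \<and> y \<in> carrier G \<and> x \<otimes> y = g \<and> a x \<noteq> 0 \<and> b y \<noteq> 0}
      = (\<lambda>x. (x, inv x \<otimes> g)) ` T"
  proof (rule equalityI; rule subsetI)
    fix p assume "p \<in> {(x, y). x \<in> carrier G \<and> y \<in> carrier G \<and> x \<otimes> y = g \<and> a x \<noteq> 0 \<and> b y \<noteq> 0}"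
    then obtain x y where p: "p = (x, y)" "x \<in> carrier G" "y \<in> carrier G" "x \<otimes> y = g"
      "a x \<noteq> 0" "b y \<noteq> 0" by blast
    then have "y = inv x \<otimes> g" using inv_solve_left[of y x g] True by simp
    then show "p \<in> (\<lambda>x. (x, inv x \<otimes> g)) ` T" using p unfolding T_def by blast
  next
    fix p assume "p \<in> (\<lambda>x. (x, inv x \<otimes> g)) ` T"
    then obtain x where x: "p = (x, inv x \<otimes> g)" "a x \<noteq> 0" "b (inv x \<otimes> g) \<noteq> 0"
      unfolding T_def by blast
    moreover have "x \<in> carrier G" using x supp by blast
    moreover from this have "x \<otimes> (inv x \<otimes> g) = g" using True by (simp add: m_assoc[symmetric])
    ultimately show "p \<in> {(x, y). x \<in> carrier G \<and> y \<in> carrier G \<and> x \<otimes> y = g \<and> a x \<noteq> 0 \<and> b y \<noteq> 0}"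
      using True by simp
  qed
  moreover have "inj_on (\<lambda>x. (x, inv x \<otimes> g)) T" by (rule inj_onI) simp
  ultimately have "conv G a b g = (\<Sum>x\<in>T. a x * b (inv x \<otimes> g))"
    unfolding conv_def by (simp add: sum.reindex)
  also have "\<dots> = (\<Sum>x\<in>A. a x * b (inv x \<otimes> g))"
    by (rule sum.mono_neutral_left) (use A in \<open>auto simp: T_def\<close>)
  finally show ?thesis using True by simp
qed

lemma conv_lincomb_left:
  fixes a a' b :: "'a \<Rightarrow> 'k::comm_ring_1"
  assumes a: "a \<in> grp_alg G" and a': "a' \<in> grp_alg G"
  shows "conv G (lincomb c a a') b = lincomb c (conv G a b) (conv G a' b)"
proof
  fix g
  define A where "A = {x. a x \<noteq> 0} \<union> {x. a' x \<noteq> 0}"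
  have "finite A" unfolding A_def using grp_alg_finite_support a a' by blast
  moreover have "lincomb c a a' \<in> grp_alg G" by (rule k_subspace_lincomb[OF k_subspace_grp_alg a a'])
  moreover have "{x. lincomb c a a' x \<noteq> 0} \<subseteq> A" unfolding A_def by auto
  ultimately show "conv G (lincomb c a a') b g = lincomb c (conv G a b) (conv G a' b) g"
    using a a' by (simp add: conv_eq_sum[of _ A] A_def sum_distrib_left sum.distrib algebra_simps)
qed

lemma conv_lincomb_right:
  fixes a b b' :: "'a \<Rightarrow> 'k::comm_ring_1"
  assumes a: "a \<in> grp_alg G"
  shows "conv G a (lincomb c b b') = lincomb c (conv G a b) (conv G a b')"
  using a grp_alg_finite_support[OF a]
  by (simp add: fun_eq_iff conv_eq_sum[OF a _ order_refl] sum_distrib_left sum.distrib algebra_simps)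

lemma k_linear_on_conv_left: "k_linear_on (grp_alg G) (\<lambda>u. conv G u (v :: 'a \<Rightarrow> 'k::comm_ring_1))"
  by (rule k_linear_onI) (rule conv_lincomb_left)

lemma k_linear_on_conv_right: "(a :: 'a \<Rightarrow> 'k::comm_ring_1) \<in> grp_alg G \<Longrightarrow> k_linear_on V (conv G a)"
  by (rule k_linear_onI) (rule conv_lincomb_right)

lemma conv_diff_left:
  fixes a b c :: "'a \<Rightarrow> 'k::comm_ring_1"
  assumes "a \<in> grp_alg G" "b \<in> grp_alg G"
  shows "conv G (\<lambda>x. a x - b x) c = (\<lambda>x. conv G a c x - conv G b c x)"
  using conv_lincomb_left[OF assms(2,1), of "-1" c] by simp

lemma conv_diff_right:
  fixes a b c :: "'a \<Rightarrow> 'k::comm_ring_1"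
  assumes "c \<in> grp_alg G"
  shows "conv G c (\<lambda>x. a x - b x) = (\<lambda>x. conv G c a x - conv G c b x)"
  using conv_lincomb_right[OF assms, of "-1" b a] by simp

lemma conv_add_right:
  fixes a b c :: "'a \<Rightarrow> 'k::comm_ring_1"
  assumes "c \<in> grp_alg G"
  shows "conv G c (\<lambda>x. a x + b x) = (\<lambda>x. conv G c a x + conv G c b x)"
  using conv_lincomb_right[OF assms, of 1 a b] by simp

lemma conv_delta_left:
  fixes b :: "'a \<Rightarrow> 'k::comm_ring_1"
  assumes x: "x \<in> carrier G"
  shows "conv G (delta x) b = (\<lambda>g. if g \<in> carrier G then b (inv x \<otimes> g) else 0)"
proof -
  have "{y. (delta x y :: 'k) \<noteq> 0} \<subseteq> {x}" by (auto simp: delta_def)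
  then show ?thesis
    by (simp add: fun_eq_iff conv_eq_sum[OF delta_grp_alg[OF x] finite.insertI[OF finite.emptyI]])
       (simp add: delta_def)
qed

lemma conv_delta_delta:
  assumes "x \<in> carrier G" "y \<in> carrier G"
  shows "conv G (delta x) (delta y) = (delta (x \<otimes> y) :: 'a \<Rightarrow> 'k::comm_ring_1)"
  unfolding conv_delta_left[OF assms(1)] using assms by (auto simp: fun_eq_iff delta_def inv_solve_left')

lemma conv_closed:
  fixes a b :: "'a \<Rightarrow> 'k::comm_ring_1"
  assumes a: "a \<in> grp_alg G" and b: "b \<in> grp_alg G"
  shows "conv G a b \<in> grp_alg G"
proof (rule grp_alg_linear_into[OF k_linear_on_conv_left k_subspace_grp_alg _ a])
  fix x assume x: "x \<in> carrier G"
  have "{g. conv G (delta x) b g \<noteq> 0} \<subseteq> (\<lambda>y. x \<otimes> y) ` {y. b y \<noteq> 0}"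
  proof
    fix g assume "g \<in> {g. conv G (delta x) b g \<noteq> 0}"
    then have g: "g \<in> carrier G" "b (inv x \<otimes> g) \<noteq> 0" by (auto simp: conv_delta_left[OF x] split: if_splits)
    then have "g = x \<otimes> (inv x \<otimes> g)" using x by (simp add: m_assoc[symmetric])
    then show "g \<in> (\<lambda>y. x \<otimes> y) ` {y. b y \<noteq> 0}" using g by blast
  qed
  moreover have "finite ((\<lambda>y. x \<otimes> y) ` {y. b y \<noteq> 0})" using grp_alg_finite_support[OF b] by simp
  moreover have "{g. conv G (delta x) b g \<noteq> 0} \<subseteq> carrier G"
    by (auto simp: conv_delta_left[OF x] split: if_splits)
  ultimately show "conv G (delta x) b \<in> grp_alg G"
    unfolding grp_alg_def fsupp_on_def by (blast intro: finite_subset)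
qed

lemma conv_assoc:
  fixes a b c :: "'a \<Rightarrow> 'k::comm_ring_1"
  assumes "a \<in> grp_alg G" "b \<in> grp_alg G"
  shows "conv G (conv G a b) c = conv G a (conv G b c)"
proof (rule bilinear_eq_on_grp_alg[where f = "\<lambda>u v. conv G (conv G u v) c"
      and g = "\<lambda>u v. conv G u (conv G v c)", OF assms])
  fix u v :: "'a \<Rightarrow> 'k" assume u: "u \<in> grp_alg G" and v: "v \<in> grp_alg G"
  show "k_linear_on (grp_alg G) (\<lambda>u. conv G (conv G u v) c)"
    using conv_closed[OF _ v]
    by (intro k_linear_on_comp[where W = "grp_alg G", OF k_linear_on_conv_left _ k_linear_on_conv_left])
  show "k_linear_on (grp_alg G) (\<lambda>u. conv G u (conv G v c))" by (rule k_linear_on_conv_left)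
  show "k_linear_on (grp_alg G) (\<lambda>v. conv G (conv G u v) c)"
    using conv_closed[OF u]
    by (intro k_linear_on_comp[where W = "grp_alg G", OF k_linear_on_conv_right[OF u] _ k_linear_on_conv_left])
  show "k_linear_on (grp_alg G) (\<lambda>v. conv G u (conv G v c))"
    by (intro k_linear_on_comp[where W = UNIV, OF k_linear_on_conv_left _ k_linear_on_conv_right[OF u]]) simp
next
  fix x y assume xy: "x \<in> carrier G" "y \<in> carrier G"
  then show "conv G (conv G (delta x) (delta y)) c = conv G (delta x) (conv G (delta y) c)"
    unfolding conv_delta_delta[OF xy]
    unfolding conv_delta_left[OF xy(1)] conv_delta_left[OF xy(2)] conv_delta_left[OF m_closed[OF xy]]
    by (simp add: fun_eq_iff inv_mult_group m_assoc)
qed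

lemma conv_one_left: "b \<in> grp_alg G \<Longrightarrow> conv G (delta \<one>) b = (b :: 'a \<Rightarrow> 'k::comm_ring_1)"
  using grp_alg_support[of b G] by (auto simp: conv_delta_left fun_eq_iff)

lemma conv_one_right: "a \<in> grp_alg G \<Longrightarrow> conv G a (delta \<one>) = (a :: 'a \<Rightarrow> 'k::comm_ring_1)"
  by (rule linear_eq_on_grp_alg[OF k_linear_on_conv_left k_linear_on_id]) (simp_all add: conv_delta_delta)

end

section \<open>Powers of the augmentation ideal\<close>

declare aug_pow.simps(2) [simp del]

context group
begin

lemma delta_diff_one_aug_ideal:
  "g \<in> carrier G \<Longrightarrow> (delta_diff g \<one> :: 'a \<Rightarrow> 'k::comm_ring_1) \<in> aug_ideal G"
  unfolding aug_ideal_def by (rule kspan_superset) blast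

lemma k_subspace_aug_ideal: "k_subspace (aug_ideal G :: ('a \<Rightarrow> 'k::comm_ring_1) set)"
  unfolding aug_ideal_def by (rule k_subspace_kspan)

lemma delta_diff_aug_ideal:
  assumes "x \<in> carrier G" "y \<in> carrier G"
  shows "(delta_diff x y :: 'a \<Rightarrow> 'k::comm_ring_1) \<in> aug_ideal G"
proof -
  have "(\<lambda>i. delta_diff x \<one> i - delta_diff y \<one> i :: 'k) \<in> aug_ideal G"
    using assms by (intro k_subspace_diff[OF k_subspace_aug_ideal] delta_diff_one_aug_ideal)
  then show ?thesis by simp
qed

lemma aug_ideal_subset_grp_alg: "aug_ideal G \<subseteq> (grp_alg G :: ('a \<Rightarrow> 'k::comm_ring_1) set)"
  unfolding aug_ideal_def
  by (rule kspan_minimal[OF k_subspace_grp_alg]) (auto intro: delta_diff_grp_alg)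

lemma aug_ideal_linear_into:
  fixes f :: "('a \<Rightarrow> 'k::comm_ring_1) \<Rightarrow> 'c \<Rightarrow> 'k"
  assumes f: "k_linear_on (grp_alg G) f" and W: "k_subspace W"
    and gen: "\<And>g. g \<in> carrier G \<Longrightarrow> f (delta_diff g \<one>) \<in> W" and u: "u \<in> aug_ideal G"
  shows "f u \<in> W"
proof (rule kspan_linear_into[OF f _ W])
  show "kspan {delta_diff g \<one> | g. g \<in> carrier G} \<subseteq> (grp_alg G :: ('a \<Rightarrow> 'k) set)"
    using aug_ideal_subset_grp_alg unfolding aug_ideal_def .
  show "u \<in> kspan {delta_diff g \<one> | g. g \<in> carrier G}"
    using u unfolding aug_ideal_def .
qed (use gen in blast)

lemma k_subspace_aug_pow: "k_subspace (aug_pow G n :: ('a \<Rightarrow> 'k::comm_ring_1) set)"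
  by (cases n) (simp_all add: aug_pow.simps k_subspace_grp_alg k_subspace_kspan)

lemma aug_pow_subset_grp_alg: "aug_pow G n \<subseteq> (grp_alg G :: ('a \<Rightarrow> 'k::comm_ring_1) set)"
proof (induction n)
  case 0
  then show ?case by simp
next
  case (Suc n)
  have "{conv G a b | a b. a \<in> aug_pow G n \<and> b \<in> aug_ideal G} \<subseteq> (grp_alg G :: ('a \<Rightarrow> 'k) set)"
    using Suc.IH aug_ideal_subset_grp_alg by (blast intro: conv_closed)
  then show ?case unfolding aug_pow.simps by (rule kspan_minimal[OF k_subspace_grp_alg])
qed

lemma aug_pow_Suc_linear_into:
  fixes f :: "('a \<Rightarrow> 'k::comm_ring_1) \<Rightarrow> 'c \<Rightarrow> 'k"
  assumes f: "k_linear_on (grp_alg G) f" and W: "k_subspace W"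
    and gen: "\<And>a b. a \<in> aug_pow G n \<Longrightarrow> b \<in> aug_ideal G \<Longrightarrow> f (conv G a b) \<in> W"
    and u: "u \<in> aug_pow G (Suc n)"
  shows "f u \<in> W"
proof (rule kspan_linear_into[OF f _ W])
  show "kspan {conv G a b | a b. a \<in> aug_pow G n \<and> b \<in> aug_ideal G} \<subseteq> (grp_alg G :: ('a \<Rightarrow> 'k) set)"
    using aug_pow_subset_grp_alg[of "Suc n"] by (simp only: aug_pow.simps)
  show "u \<in> kspan {conv G a b | a b. a \<in> aug_pow G n \<and> b \<in> aug_ideal G}"
    using u by (simp only: aug_pow.simps)
qed (use gen in blast)

lemma conv_mem_aug_pow_Suc:
  "a \<in> aug_pow G n \<Longrightarrow> b \<in> aug_ideal G \<Longrightarrow> conv G a b \<in> (aug_pow G (Suc n) :: ('a \<Rightarrow> 'k::comm_ring_1) set)"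
  unfolding aug_pow.simps by (rule kspan_superset) blast

lemma conv_delta_diff_one_delta:
  assumes "g \<in> carrier G" "y \<in> carrier G"
  shows "conv G (delta_diff g \<one>) (delta y) = (delta_diff (g \<otimes> y) y :: 'a \<Rightarrow> 'k::comm_ring_1)"
  using assms by (simp add: conv_diff_left delta_grp_alg conv_delta_delta)

lemma aug_ideal_conv_right:
  fixes u v :: "'a \<Rightarrow> 'k::comm_ring_1"
  assumes u: "u \<in> aug_ideal G" and v: "v \<in> grp_alg G"
  shows "conv G u v \<in> aug_ideal G"
proof (rule aug_ideal_linear_into[OF k_linear_on_conv_left k_subspace_aug_ideal _ u])
  fix g assume g: "g \<in> carrier G"
  show "conv G (delta_diff g \<one>) v \<in> aug_ideal G"
  proof (rule grp_alg_linear_into[OF k_linear_on_conv_right k_subspace_aug_ideal _ v])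
    show "delta_diff g \<one> \<in> grp_alg G" using g by (simp add: delta_diff_grp_alg)
    show "conv G (delta_diff g \<one>) (delta y) \<in> aug_ideal G" if "y \<in> carrier G" for y
      using g that by (simp add: conv_delta_diff_one_delta delta_diff_aug_ideal)
  qed
qed

lemma aug_pow_conv_right:
  fixes u v :: "'a \<Rightarrow> 'k::comm_ring_1"
  assumes "u \<in> aug_pow G n" "v \<in> grp_alg G"
  shows "conv G u v \<in> aug_pow G n"
  using assms(1)
proof (induction n arbitrary: u)
  case 0
  then show ?case using conv_closed[OF _ assms(2)] by simp
next
  case (Suc n)
  show ?case
  proof (rule aug_pow_Suc_linear_into[OF k_linear_on_conv_left k_subspace_aug_pow _ Suc.prems])
    fix a b :: "'a \<Rightarrow> 'k" assume a: "a \<in> aug_pow G n" and b: "b \<in> aug_ideal G"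
    have "conv G (conv G a b) v = conv G a (conv G b v)"
      using a b aug_pow_subset_grp_alg aug_ideal_subset_grp_alg by (blast intro: conv_assoc)
    then show "conv G (conv G a b) v \<in> aug_pow G (Suc n)"
      using conv_mem_aug_pow_Suc[OF a aug_ideal_conv_right[OF b assms(2)]] by simp
  qed
qed

lemma aug_pow_conv:
  fixes u v :: "'a \<Rightarrow> 'k::comm_ring_1"
  assumes u: "u \<in> aug_pow G m" and v: "v \<in> aug_pow G n"
  shows "conv G u v \<in> aug_pow G (m + n)"
  using v
proof (induction n arbitrary: v)
  case 0
  then show ?case using aug_pow_conv_right[OF u] by simp
next
  case (Suc n)
  have u': "u \<in> grp_alg G" using u aug_pow_subset_grp_alg by blast
  show ?case
  proof (rule aug_pow_Suc_linear_into[OF k_linear_on_conv_right[OF u'] k_subspace_aug_pow _ Suc.prems])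
    fix a b :: "'a \<Rightarrow> 'k" assume a: "a \<in> aug_pow G n" and b: "b \<in> aug_ideal G"
    have "conv G u (conv G a b) = conv G (conv G u a) b"
      using a aug_pow_subset_grp_alg by (blast intro: conv_assoc[OF u', symmetric])
    then show "conv G u (conv G a b) \<in> aug_pow G (m + Suc n)"
      using conv_mem_aug_pow_Suc[OF Suc.IH[OF a] b] by simp
  qed
qed

lemma aug_pow_Suc_subset: "aug_pow G (Suc n) \<subseteq> (aug_pow G n :: ('a \<Rightarrow> 'k::comm_ring_1) set)"
  unfolding aug_pow.simps
  using aug_pow_conv_right aug_ideal_subset_grp_alg
  by (intro kspan_minimal[OF k_subspace_aug_pow]) blast

lemma aug_pow_antimono: "m \<le> n \<Longrightarrow> aug_pow G n \<subseteq> (aug_pow G m :: ('a \<Rightarrow> 'k::comm_ring_1) set)"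
  using lift_Suc_antimono_le[of "aug_pow G", OF aug_pow_Suc_subset] by blast

lemma aug_ideal_subset_aug_pow_one: "aug_ideal G \<subseteq> (aug_pow G 1 :: ('a \<Rightarrow> 'k::comm_ring_1) set)"
proof
  fix b :: "'a \<Rightarrow> 'k" assume b: "b \<in> aug_ideal G"
  then have "conv G (delta \<one>) b \<in> aug_pow G (Suc 0)"
    by (intro conv_mem_aug_pow_Suc) (simp add: delta_grp_alg)
  moreover have "conv G (delta \<one>) b = b"
    using b aug_ideal_subset_grp_alg by (blast intro: conv_one_left)
  ultimately show "b \<in> aug_pow G 1" by (simp add: One_nat_def)
qed

lemma conv_aug_ideal_aug_pow_two:
  fixes a b :: "'a \<Rightarrow> 'k::comm_ring_1"
  assumes "a \<in> aug_ideal G" "b \<in> aug_ideal G"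
  shows "conv G a b \<in> aug_pow G 2"
proof -
  have "conv G a b \<in> aug_pow G (1 + 1)"
    using assms aug_ideal_subset_aug_pow_one by (intro aug_pow_conv) blast+
  then show ?thesis by (simp only: one_add_one)
qed

lemma commutator_delta_diff_aug_pow_two:
  assumes a: "a \<in> carrier G" and b: "b \<in> carrier G"
  shows "(delta_diff (a \<otimes> b \<otimes> inv a \<otimes> inv b) \<one> :: 'a \<Rightarrow> 'k::comm_ring_1) \<in> aug_pow G 2"
proof -
  have ab: "a \<otimes> b \<in> carrier G" "b \<otimes> a \<in> carrier G" "inv (b \<otimes> a) \<in> carrier G" using a b by auto
  have conv_gens: "conv G (delta_diff x \<one>) (delta_diff y \<one>)
      = (\<lambda>i. delta (x \<otimes> y) i - delta x i - delta y i + delta \<one> i :: 'k)"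
    if "x \<in> carrier G" "y \<in> carrier G" for x y
    using that by (simp add: conv_diff_right delta_diff_grp_alg conv_delta_diff_one_delta fun_eq_iff)
  have "(\<lambda>i. conv G (delta_diff a \<one>) (delta_diff b \<one>) i
      - conv G (delta_diff b \<one>) (delta_diff a \<one>) i :: 'k) \<in> aug_pow G 2"
    using a b by (intro k_subspace_diff[OF k_subspace_aug_pow] conv_aug_ideal_aug_pow_two
        delta_diff_one_aug_ideal)
  \<comment> \<open>(a - 1)(b - 1) - (b - 1)(a - 1) = ab - ba\<close>
  then have "(delta_diff (a \<otimes> b) (b \<otimes> a) :: 'a \<Rightarrow> 'k) \<in> aug_pow G 2"
    using a b by (simp add: conv_gens)
  then have "conv G (delta_diff (a \<otimes> b) (b \<otimes> a) :: 'a \<Rightarrow> 'k) (delta (inv (b \<otimes> a))) \<in> aug_pow G 2"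
    using ab by (blast intro: aug_pow_conv_right delta_grp_alg)
  moreover have "a \<otimes> b \<otimes> inv (b \<otimes> a) = a \<otimes> b \<otimes> inv a \<otimes> inv b"
    using a b by (simp add: inv_mult_group m_assoc)
  ultimately show ?thesis
    using ab by (simp add: conv_diff_left delta_grp_alg conv_delta_delta)
qed

lemma derived_delta_diff_aug_pow_two:
  assumes "c \<in> derived G (carrier G)"
  shows "(delta_diff c \<one> :: 'a \<Rightarrow> 'k::comm_ring_1) \<in> aug_pow G 2"
  using assms unfolding derived_def
proof (induction c rule: generate.induct)
  case one
  then show ?case using k_subspace_zero[OF k_subspace_aug_pow] by simp
next
  case (incl h)
  then show ?case using commutator_delta_diff_aug_pow_two by blast
next
  case (inv h)
  then obtain a b where ab: "a \<in> carrier G" "b \<in> carrier G" "h = a \<otimes> b \<otimes> inv a \<otimes> inv b" by blast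
  then have "inv h = b \<otimes> a \<otimes> inv b \<otimes> inv a" by (simp add: inv_mult_group m_assoc)
  then show ?case using commutator_delta_diff_aug_pow_two[OF ab(2,1)] by simp
next
  case (eng h1 h2)
  have "derived_set G (carrier G) \<subseteq> carrier G" by (rule derived_set_in_carrier) simp
  then have h: "h1 \<in> carrier G" "h2 \<in> carrier G" using generate_in_carrier eng.hyps by blast+
  \<comment> \<open>h1 h2 - 1 = (h1 - 1) h2 + (h2 - 1)\<close>
  have "conv G (delta_diff h1 \<one> :: 'a \<Rightarrow> 'k) (delta h2) \<in> aug_pow G 2"
    using eng.IH(1) h by (blast intro: aug_pow_conv_right delta_grp_alg)
  then have "(\<lambda>i. conv G (delta_diff h1 \<one> :: 'a \<Rightarrow> 'k) (delta h2) i + delta_diff h2 \<one> i) \<in> aug_pow G 2"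
    using eng.IH(2) by (rule k_subspace_add[OF k_subspace_aug_pow])
  then show ?case using h by (simp add: conv_delta_diff_one_delta)
qed

end

section \<open>Maps induced by group homomorphisms\<close>

context group_hom
begin

lemma alg_map_eq_sum:
  fixes a :: "'a \<Rightarrow> 'k::comm_ring_1"
  assumes "finite A" "{x. a x \<noteq> 0} \<subseteq> A" "A \<subseteq> carrier G"
  shows "alg_map G h a y = (\<Sum>x\<in>{x\<in>A. h x = y}. a x)"
  unfolding alg_map_def
proof (rule sum.mono_neutral_left)
  show "finite {x \<in> A. h x = y}" using assms by simp
  show "{x \<in> carrier G. h x = y \<and> a x \<noteq> 0} \<subseteq> {x \<in> A. h x = y}" using assms by blast
qed (use assms in blast)

lemma alg_map_lincomb:
  fixes u v :: "'a \<Rightarrow> 'k::comm_ring_1"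
  assumes u: "u \<in> grp_alg G" and v: "v \<in> grp_alg G"
  shows "alg_map G h (lincomb c u v) = lincomb c (alg_map G h u) (alg_map G h v)"
proof
  fix y
  define A where "A = {x. u x \<noteq> 0} \<union> {x. v x \<noteq> 0}"
  have A: "finite A" "A \<subseteq> carrier G"
    unfolding A_def using grp_alg_finite_support[OF u] grp_alg_finite_support[OF v]
      grp_alg_support[OF u] grp_alg_support[OF v] by auto
  have supp: "{x. lincomb c u v x \<noteq> 0} \<subseteq> A" "{x. u x \<noteq> 0} \<subseteq> A" "{x. v x \<noteq> 0} \<subseteq> A"
    unfolding A_def by auto
  note sums = alg_map_eq_sum[OF A(1) supp(1) A(2)] alg_map_eq_sum[OF A(1) supp(2) A(2)]
    alg_map_eq_sum[OF A(1) supp(3) A(2)]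
  show "alg_map G h (lincomb c u v) y = lincomb c (alg_map G h u) (alg_map G h v) y"
    unfolding sums by (simp add: sum.distrib sum_distrib_left)
qed

lemma k_linear_on_alg_map: "k_linear_on (grp_alg G) (alg_map G h :: ('a \<Rightarrow> 'k::comm_ring_1) \<Rightarrow> _)"
  by (rule k_linear_onI) (rule alg_map_lincomb)

lemma alg_map_diff:
  fixes u v :: "'a \<Rightarrow> 'k::comm_ring_1"
  assumes "u \<in> grp_alg G" "v \<in> grp_alg G"
  shows "alg_map G h (\<lambda>x. u x - v x) = (\<lambda>y. alg_map G h u y - alg_map G h v y)"
  using alg_map_lincomb[OF assms(2,1), of "-1"] by simp

lemma alg_map_delta:
  assumes x: "x \<in> carrier G"
  shows "alg_map G h (delta x) = (delta (h x) :: 'c \<Rightarrow> 'k::comm_ring_1)"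
proof
  fix y
  have "{z. (delta x z :: 'k) \<noteq> 0} \<subseteq> {x}" by (auto simp: delta_def)
  then have "alg_map G h (delta x) y = (\<Sum>z\<in>{z\<in>{x}. h z = y}. delta x z :: 'k)"
    using x by (intro alg_map_eq_sum) auto
  also have "{z\<in>{x}. h z = y} = (if h x = y then {x} else {})" by auto
  finally show "alg_map G h (delta x) y = (delta (h x) y :: 'k)"
    by (simp add: delta_def)
qed

lemma alg_map_delta_diff:
  assumes "x \<in> carrier G" "y \<in> carrier G"
  shows "alg_map G h (delta_diff x y) = (delta_diff (h x) (h y) :: 'c \<Rightarrow> 'k::comm_ring_1)"
  using assms by (simp add: alg_map_diff delta_grp_alg alg_map_delta)

lemma alg_map_closed:
  fixes a :: "'a \<Rightarrow> 'k::comm_ring_1"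
  assumes "a \<in> grp_alg G"
  shows "alg_map G h a \<in> grp_alg H"
proof (rule grp_alg_linear_into[OF k_linear_on_alg_map k_subspace_grp_alg _ assms])
  show "alg_map G h (delta x) \<in> grp_alg H" if "x \<in> carrier G" for x
    using that by (simp add: alg_map_delta delta_grp_alg)
qed

lemma alg_map_conv:
  fixes a b :: "'a \<Rightarrow> 'k::comm_ring_1"
  assumes a: "a \<in> grp_alg G" and b: "b \<in> grp_alg G"
  shows "alg_map G h (conv G a b) = conv H (alg_map G h a) (alg_map G h b)"
proof (rule bilinear_eq_on_grp_alg[where f = "\<lambda>u v. alg_map G h (conv G u v)"
      and g = "\<lambda>u v. conv H (alg_map G h u) (alg_map G h v)", OF a b])
  fix u v :: "'a \<Rightarrow> 'k" assume u: "u \<in> grp_alg G" and v: "v \<in> grp_alg G"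
  show "k_linear_on (grp_alg G) (\<lambda>u. alg_map G h (conv G u v))"
    using G.conv_closed[OF _ v]
    by (intro k_linear_on_comp[where W = "grp_alg G", OF G.k_linear_on_conv_left _ k_linear_on_alg_map])
  show "k_linear_on (grp_alg G) (\<lambda>u. conv H (alg_map G h u) (alg_map G h v))"
    using alg_map_closed
    by (intro k_linear_on_comp[where W = "grp_alg H", OF k_linear_on_alg_map _ H.k_linear_on_conv_left])
  show "k_linear_on (grp_alg G) (\<lambda>v. alg_map G h (conv G u v))"
    using G.conv_closed[OF u]
    by (intro k_linear_on_comp[where W = "grp_alg G", OF G.k_linear_on_conv_right[OF u] _ k_linear_on_alg_map])
  show "k_linear_on (grp_alg G) (\<lambda>v. conv H (alg_map G h u) (alg_map G h v))"
    by (intro k_linear_on_comp[where W = UNIV, OF k_linear_on_alg_map _ H.k_linear_on_conv_right]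
        alg_map_closed[OF u]) simp
next
  fix x y assume "x \<in> carrier G" "y \<in> carrier G"
  then show "alg_map G h (conv G (delta x) (delta y)) = conv H (alg_map G h (delta x)) (alg_map G h (delta y))"
    by (simp add: G.conv_delta_delta H.conv_delta_delta alg_map_delta)
qed

lemma alg_map_aug_ideal:
  fixes u :: "'a \<Rightarrow> 'k::comm_ring_1"
  assumes "u \<in> aug_ideal G"
  shows "alg_map G h u \<in> aug_ideal H"
proof (rule G.aug_ideal_linear_into[OF k_linear_on_alg_map H.k_subspace_aug_ideal _ assms])
  show "alg_map G h (delta_diff g \<one>\<^bsub>G\<^esub>) \<in> aug_ideal H" if "g \<in> carrier G" for g
    using that by (simp add: alg_map_delta_diff H.delta_diff_one_aug_ideal)
qed

lemma alg_map_aug_pow: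
  fixes u :: "'a \<Rightarrow> 'k::comm_ring_1"
  assumes "u \<in> aug_pow G n"
  shows "alg_map G h u \<in> aug_pow H n"
  using assms
proof (induction n arbitrary: u)
  case 0
  then show ?case using alg_map_closed by simp
next
  case (Suc n)
  show ?case
  proof (rule G.aug_pow_Suc_linear_into[OF k_linear_on_alg_map H.k_subspace_aug_pow _ Suc.prems])
    fix a b :: "'a \<Rightarrow> 'k" assume a: "a \<in> aug_pow G n" and b: "b \<in> aug_ideal G"
    then have "alg_map G h (conv G a b) = conv H (alg_map G h a) (alg_map G h b)"
      using G.aug_pow_subset_grp_alg G.aug_ideal_subset_grp_alg by (blast intro: alg_map_conv)
    then show "alg_map G h (conv G a b) \<in> aug_pow H (Suc n)"
      using H.conv_mem_aug_pow_Suc[OF Suc.IH[OF a] alg_map_aug_ideal[OF b]] by simp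
  qed
qed

end

lemma alg_map_minus_id_conv:
  fixes a b :: "'a \<Rightarrow> 'k::comm_ring_1"
  assumes "group_hom G G h" and a: "a \<in> grp_alg G" and b: "b \<in> grp_alg G"
  shows "(\<lambda>i. alg_map G h (conv G a b) i - conv G a b i)
    = (\<lambda>i. conv G (\<lambda>j. alg_map G h a j - a j) (alg_map G h b) i + conv G a (\<lambda>j. alg_map G h b j - b j) i)"
proof -
  interpret group_hom G G h by fact
  have "alg_map G h a \<in> grp_alg G" "alg_map G h b \<in> grp_alg G" using a b by (simp_all add: alg_map_closed)
  then show ?thesis
    using a b by (simp add: alg_map_conv G.conv_diff_left G.conv_diff_right fun_eq_iff)
qed

section \<open>Split extensions\<close>

lemma tens_lincomb_left: "tens (lincomb c a a') b = lincomb c (tens a b) (tens a' (b :: 'h \<Rightarrow> 'k::comm_ring_1))"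
  unfolding tens_def by (auto simp: fun_eq_iff algebra_simps)

lemma tens_lincomb_right: "tens a (lincomb c b b') = lincomb c (tens a b) (tens a (b' :: 'h \<Rightarrow> 'k::comm_ring_1))"
  unfolding tens_def by (auto simp: fun_eq_iff algebra_simps)

lemma tens_delta_delta: "tens (delta x) (delta y) = (delta (x, y) :: _ \<Rightarrow> 'k::comm_ring_1)"
  unfolding tens_def delta_def by (auto simp: fun_eq_iff)

lemma tens_in_tens_space:
  fixes a :: "'f \<Rightarrow> 'k::comm_ring_1" and b :: "'h \<Rightarrow> 'k"
  assumes a: "a \<in> grp_alg F" and b: "b \<in> grp_alg H"
  shows "tens a b \<in> tens_space F H"
proof -
  have supp: "{p. tens a b p \<noteq> 0} \<subseteq> {x. a x \<noteq> 0} \<times> {y. b y \<noteq> 0}"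
    unfolding tens_def by auto
  have "finite ({x. a x \<noteq> 0} \<times> {y. b y \<noteq> 0})"
    using grp_alg_finite_support[OF a] grp_alg_finite_support[OF b] by simp
  then have "finite {p. tens a b p \<noteq> 0}" by (rule finite_subset[OF supp])
  moreover have "{x. a x \<noteq> 0} \<times> {y. b y \<noteq> 0} \<subseteq> carrier F \<times> carrier H"
    using grp_alg_support[OF a] grp_alg_support[OF b] by blast
  then have "{p. tens a b p \<noteq> 0} \<subseteq> carrier F \<times> carrier H" using supp by (rule order_trans[rotated])
  ultimately show ?thesis unfolding tens_space_def fsupp_on_def by simp
qed

locale split_extension = F: group F + G: group G + H: group H
  for F :: "('f, 'x) monoid_scheme" and G :: "('g, 'y) monoid_scheme" and H :: "('h, 'z) monoid_scheme" +
  fixes \<iota> :: "'f \<Rightarrow> 'g" and \<pi> :: "'g \<Rightarrow> 'h" and \<sigma> :: "'h \<Rightarrow> 'g"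
  assumes iota_hom: "\<iota> \<in> hom F G" and pi_hom: "\<pi> \<in> hom G H" and sigma_hom: "\<sigma> \<in> hom H G"
    and iota_inj: "inj_on \<iota> (carrier F)" and iota_image: "\<iota> ` carrier F = kernel G H \<pi>"
    and pi_sigma: "\<And>h. h \<in> carrier H \<Longrightarrow> \<pi> (\<sigma> h) = h"
begin

sublocale iota: group_hom F G \<iota> by unfold_locales (rule iota_hom)

sublocale sigma: group_hom H G \<sigma> by unfold_locales (rule sigma_hom)

sublocale pi: group_hom G H \<pi> by unfold_locales (rule pi_hom)

lemma pi_iota: "x \<in> carrier F \<Longrightarrow> \<pi> (\<iota> x) = \<one>\<^bsub>H\<^esub>"
  using iota_image unfolding kernel_def by blast

lemma iota_inv_into:
  assumes "z \<in> carrier G" "\<pi> z = \<one>\<^bsub>H\<^esub>"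
  shows "the_inv_into (carrier F) \<iota> z \<in> carrier F" "\<iota> (the_inv_into (carrier F) \<iota> z) = z"
proof -
  have "z \<in> \<iota> ` carrier F" using assms iota_image unfolding kernel_def by blast
  then show "the_inv_into (carrier F) \<iota> z \<in> carrier F" "\<iota> (the_inv_into (carrier F) \<iota> z) = z"
    using the_inv_into_into[OF iota_inj] f_the_inv_into_f[OF iota_inj] by auto
qed

definition decomp :: "'g \<Rightarrow> 'f \<times> 'h" where
  "decomp g = (the_inv_into (carrier F) \<iota> (g \<otimes>\<^bsub>G\<^esub> inv\<^bsub>G\<^esub> \<sigma> (\<pi> g)), \<pi> g)"

lemma decomp_eq:
  assumes x: "x \<in> carrier F" and y: "y \<in> carrier H"
  shows "decomp (\<iota> x \<otimes>\<^bsub>G\<^esub> \<sigma> y) = (x, y)"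
proof -
  have "\<pi> (\<iota> x \<otimes>\<^bsub>G\<^esub> \<sigma> y) = y" using x y pi_sigma pi_iota by simp
  moreover have "\<iota> x \<otimes>\<^bsub>G\<^esub> \<sigma> y \<otimes>\<^bsub>G\<^esub> inv\<^bsub>G\<^esub> \<sigma> y = \<iota> x" using x y by (simp add: G.m_assoc)
  ultimately show ?thesis unfolding decomp_def using the_inv_into_f_f[OF iota_inj x] by simp
qed

lemma decompose:
  assumes g: "g \<in> carrier G"
  obtains x y where "x \<in> carrier F" "y \<in> carrier H" "g = \<iota> x \<otimes>\<^bsub>G\<^esub> \<sigma> y" "decomp g = (x, y)"
proof -
  let ?z = "g \<otimes>\<^bsub>G\<^esub> inv\<^bsub>G\<^esub> \<sigma> (\<pi> g)"
  have z: "?z \<in> carrier G" "\<pi> ?z = \<one>\<^bsub>H\<^esub>" using g pi_sigma by simp_all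
  show ?thesis
  proof (rule that)
    show "the_inv_into (carrier F) \<iota> ?z \<in> carrier F" by (rule iota_inv_into(1)[OF z])
    show "\<pi> g \<in> carrier H" using g by simp
    show "g = \<iota> (the_inv_into (carrier F) \<iota> ?z) \<otimes>\<^bsub>G\<^esub> \<sigma> (\<pi> g)"
      using g by (simp add: iota_inv_into(2)[OF z] G.m_assoc)
    show "decomp g = (the_inv_into (carrier F) \<iota> ?z, \<pi> g)" unfolding decomp_def ..
  qed
qed

lemma Phi_eq: "Phi F H G \<iota> \<sigma> c g = (if g \<in> carrier G then c (decomp g) else 0)"
proof (cases "g \<in> carrier G")
  case False
  have "\<iota> x \<otimes>\<^bsub>G\<^esub> \<sigma> y \<in> carrier G" if "x \<in> carrier F" "y \<in> carrier H" for x y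
    using that by simp
  then have "{(x, y). x \<in> carrier F \<and> y \<in> carrier H \<and> \<iota> x \<otimes>\<^bsub>G\<^esub> \<sigma> y = g \<and> c (x, y) \<noteq> 0} = {}"
    using False by blast
  then show ?thesis unfolding Phi_def using False by (simp only: sum.empty if_False)
next
  case True
  then obtain x y where xy: "x \<in> carrier F" "y \<in> carrier H" "g = \<iota> x \<otimes>\<^bsub>G\<^esub> \<sigma> y" "decomp g = (x, y)"
    by (rule decompose)
  have unique: "(x', y') = (x, y)"
    if "x' \<in> carrier F" "y' \<in> carrier H" "\<iota> x' \<otimes>\<^bsub>G\<^esub> \<sigma> y' = g" for x' y'
    using decomp_eq[OF that(1,2)] xy(4) that(3) by simp
  have "{(x', y'). x' \<in> carrier F \<and> y' \<in> carrier H \<and> \<iota> x' \<otimes>\<^bsub>G\<^esub> \<sigma> y' = g \<and> c (x', y') \<noteq> 0}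
      = (if c (x, y) \<noteq> 0 then {(x, y)} else {})"
  proof (rule Set.set_eqI)
    fix p :: "'f \<times> 'h"
    obtain x' y' where p: "p = (x', y')" by (cases p)
    show "p \<in> {(x', y'). x' \<in> carrier F \<and> y' \<in> carrier H \<and> \<iota> x' \<otimes>\<^bsub>G\<^esub> \<sigma> y' = g \<and> c (x', y') \<noteq> 0}
        \<longleftrightarrow> p \<in> (if c (x, y) \<noteq> 0 then {(x, y)} else {})"
      using unique[of x' y'] xy unfolding p by auto
  qed
  then show ?thesis unfolding Phi_def using True xy(4) by simp
qed

lemma Phi_lincomb: "Phi F H G \<iota> \<sigma> (lincomb k u v) = lincomb k (Phi F H G \<iota> \<sigma> u) (Phi F H G \<iota> \<sigma> v)"
  unfolding Phi_eq by (simp add: fun_eq_iff)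

lemma k_linear_on_Phi: "k_linear_on V (Phi F H G \<iota> \<sigma>)"
  by (rule k_linear_onI) (rule Phi_lincomb)

lemma Phi_add: "Phi F H G \<iota> \<sigma> (\<lambda>p. c p + d p) = (\<lambda>g. Phi F H G \<iota> \<sigma> c g + Phi F H G \<iota> \<sigma> d g)"
  unfolding Phi_eq by (simp add: fun_eq_iff)

lemma Phi_closed:
  assumes c: "c \<in> tens_space F H"
  shows "Phi F H G \<iota> \<sigma> c \<in> grp_alg G"
proof -
  have "{g. Phi F H G \<iota> \<sigma> c g \<noteq> 0} \<subseteq> (\<lambda>(x, y). \<iota> x \<otimes>\<^bsub>G\<^esub> \<sigma> y) ` {p. c p \<noteq> 0}"
  proof
    fix g assume "g \<in> {g. Phi F H G \<iota> \<sigma> c g \<noteq> 0}"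
    then have g: "g \<in> carrier G" "c (decomp g) \<noteq> 0" unfolding Phi_eq by (auto split: if_splits)
    obtain x y where "x \<in> carrier F" "y \<in> carrier H" "g = \<iota> x \<otimes>\<^bsub>G\<^esub> \<sigma> y" "decomp g = (x, y)"
      using g(1) by (rule decompose)
    then show "g \<in> (\<lambda>(x, y). \<iota> x \<otimes>\<^bsub>G\<^esub> \<sigma> y) ` {p. c p \<noteq> 0}" using g(2) by force
  qed
  moreover have "finite {p. c p \<noteq> 0}" using c unfolding tens_space_def fsupp_on_def by blast
  ultimately have "finite {g. Phi F H G \<iota> \<sigma> c g \<noteq> 0}" by (blast intro: finite_surj)
  moreover have "{g. Phi F H G \<iota> \<sigma> c g \<noteq> 0} \<subseteq> carrier G" unfolding Phi_eq by auto
  ultimately show ?thesis unfolding grp_alg_def fsupp_on_def by blast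
qed

lemma Phi_inj: "inj_on (Phi F H G \<iota> \<sigma>) (tens_space F H :: ('f \<times> 'h \<Rightarrow> 'k::comm_ring_1) set)"
proof (rule inj_onI)
  fix c d :: "'f \<times> 'h \<Rightarrow> 'k"
  assume c: "c \<in> tens_space F H" and d: "d \<in> tens_space F H"
    and eq: "Phi F H G \<iota> \<sigma> c = Phi F H G \<iota> \<sigma> d"
  show "c = d"
  proof
    fix p :: "'f \<times> 'h"
    obtain x y where p: "p = (x, y)" by (cases p)
    show "c p = d p"
    proof (cases "x \<in> carrier F \<and> y \<in> carrier H")
      case True
      then have "Phi F H G \<iota> \<sigma> c (\<iota> x \<otimes>\<^bsub>G\<^esub> \<sigma> y) = c p" "Phi F H G \<iota> \<sigma> d (\<iota> x \<otimes>\<^bsub>G\<^esub> \<sigma> y) = d p"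
        unfolding Phi_eq using p decomp_eq by simp_all
      then show ?thesis using eq by simp
    next
      case False
      then have "c p = 0" "d p = 0" using c d p unfolding tens_space_def fsupp_on_def by blast+
      then show ?thesis by simp
    qed
  qed
qed

lemma Phi_surj:
  fixes d :: "'g \<Rightarrow> 'k::comm_ring_1"
  assumes d: "d \<in> grp_alg G"
  shows "d \<in> Phi F H G \<iota> \<sigma> ` tens_space F H"
proof
  let ?c = "\<lambda>(x, y). if x \<in> carrier F \<and> y \<in> carrier H then d (\<iota> x \<otimes>\<^bsub>G\<^esub> \<sigma> y) else 0"
  have "{p. ?c p \<noteq> 0} \<subseteq> decomp ` {g. d g \<noteq> 0}"
  proof
    fix p assume "p \<in> {p. ?c p \<noteq> 0}"
    moreover obtain x y where "p = (x, y)" by (cases p)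
    ultimately have "x \<in> carrier F" "y \<in> carrier H" "d (\<iota> x \<otimes>\<^bsub>G\<^esub> \<sigma> y) \<noteq> 0" "p = (x, y)"
      by (auto split: if_splits)
    then show "p \<in> decomp ` {g. d g \<noteq> 0}" using decomp_eq by force
  qed
  moreover have "finite (decomp ` {g. d g \<noteq> 0})" using grp_alg_finite_support[OF d] by simp
  moreover have "{p. ?c p \<noteq> 0} \<subseteq> carrier F \<times> carrier H" by (auto split: if_splits)
  ultimately show "?c \<in> tens_space F H"
    unfolding tens_space_def fsupp_on_def by (blast intro: finite_subset)
  show "d = Phi F H G \<iota> \<sigma> ?c"
  proof
    fix g
    show "d g = Phi F H G \<iota> \<sigma> ?c g"
    proof (cases "g \<in> carrier G")
      case True
      then obtain x y where "x \<in> carrier F" "y \<in> carrier H" "g = \<iota> x \<otimes>\<^bsub>G\<^esub> \<sigma> y" "decomp g = (x, y)"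
        by (rule decompose)
      then show ?thesis unfolding Phi_eq by simp
    next
      case False
      then show ?thesis unfolding Phi_eq using grp_alg_support[OF d] by auto
    qed
  qed
qed

lemma Phi_bij: "bij_betw (Phi F H G \<iota> \<sigma>) (tens_space F H :: ('f \<times> 'h \<Rightarrow> 'k::comm_ring_1) set) (grp_alg G)"
  unfolding bij_betw_def using Phi_inj Phi_closed Phi_surj by blast

lemma Phi_delta:
  assumes "x \<in> carrier F" "y \<in> carrier H"
  shows "Phi F H G \<iota> \<sigma> (delta (x, y)) = (delta (\<iota> x \<otimes>\<^bsub>G\<^esub> \<sigma> y) :: 'g \<Rightarrow> 'k::comm_ring_1)"
proof
  fix g
  show "Phi F H G \<iota> \<sigma> (delta (x, y)) g = (delta (\<iota> x \<otimes>\<^bsub>G\<^esub> \<sigma> y) g :: 'k)"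
  proof (cases "g \<in> carrier G")
    case True
    then obtain x' y' where g: "x' \<in> carrier F" "y' \<in> carrier H" "g = \<iota> x' \<otimes>\<^bsub>G\<^esub> \<sigma> y'"
        "decomp g = (x', y')"
      by (rule decompose)
    have "(x', y') = (x, y) \<longleftrightarrow> g = \<iota> x \<otimes>\<^bsub>G\<^esub> \<sigma> y"
    proof
      assume "(x', y') = (x, y)"
      then show "g = \<iota> x \<otimes>\<^bsub>G\<^esub> \<sigma> y" using g(3) by simp
    next
      assume "g = \<iota> x \<otimes>\<^bsub>G\<^esub> \<sigma> y"
      then show "(x', y') = (x, y)" using g(4) decomp_eq[OF assms] by simp
    qed
    then show ?thesis unfolding Phi_eq delta_def using True g(4) by simp
  next
    case False
    then show ?thesis unfolding Phi_eq delta_def using assms by auto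
  qed
qed

lemma Phi_tens:
  fixes a :: "'f \<Rightarrow> 'k::comm_ring_1" and b :: "'h \<Rightarrow> 'k"
  assumes a: "a \<in> grp_alg F" and b: "b \<in> grp_alg H"
  shows "Phi F H G \<iota> \<sigma> (tens a b) = conv G (alg_map F \<iota> a) (alg_map H \<sigma> b)"
proof (rule bilinear_eq_on_grp_alg[where f = "\<lambda>u v. Phi F H G \<iota> \<sigma> (tens u v)"
      and g = "\<lambda>u v. conv G (alg_map F \<iota> u) (alg_map H \<sigma> v)", OF a b])
  fix v :: "'h \<Rightarrow> 'k"
  show "k_linear_on (grp_alg F) (\<lambda>u. Phi F H G \<iota> \<sigma> (tens u v))"
    by (rule k_linear_onI) (simp only: tens_lincomb_left Phi_lincomb)
  show "k_linear_on (grp_alg F) (\<lambda>u. conv G (alg_map F \<iota> u) (alg_map H \<sigma> v))"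
    using iota.alg_map_closed
    by (intro k_linear_on_comp[where W = "grp_alg G", OF iota.k_linear_on_alg_map _ G.k_linear_on_conv_left])
next
  fix u :: "'f \<Rightarrow> 'k" assume u: "u \<in> grp_alg F"
  show "k_linear_on (grp_alg H) (\<lambda>v. Phi F H G \<iota> \<sigma> (tens u v))"
    by (rule k_linear_onI) (simp only: tens_lincomb_right Phi_lincomb)
  show "k_linear_on (grp_alg H) (\<lambda>v. conv G (alg_map F \<iota> u) (alg_map H \<sigma> v))"
    by (intro k_linear_on_comp[where W = UNIV, OF sigma.k_linear_on_alg_map _
          G.k_linear_on_conv_right[OF iota.alg_map_closed[OF u]]]) simp
next
  fix x y assume "x \<in> carrier F" "y \<in> carrier H"
  then show "Phi F H G \<iota> \<sigma> (tens (delta x) (delta y))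
      = conv G (alg_map F \<iota> (delta x)) (alg_map H \<sigma> (delta y :: 'h \<Rightarrow> 'k))"
    by (simp add: tens_delta_delta Phi_delta iota.alg_map_delta sigma.alg_map_delta G.conv_delta_delta)
qed

lemma Phi_tens_lact_delta:
  fixes c :: "'f \<times> 'h \<Rightarrow> 'k::comm_ring_1"
  assumes x: "x \<in> carrier F"
  shows "Phi F H G \<iota> \<sigma> (tens_lact F (delta x) c) = conv G (alg_map F \<iota> (delta x)) (Phi F H G \<iota> \<sigma> c)"
proof
  fix g
  have ix: "\<iota> x \<in> carrier G" using x by simp
  show "Phi F H G \<iota> \<sigma> (tens_lact F (delta x) c) g = conv G (alg_map F \<iota> (delta x)) (Phi F H G \<iota> \<sigma> c) g"
  proof (cases "g \<in> carrier G")
    case False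
    then show ?thesis unfolding Phi_eq iota.alg_map_delta[OF x] G.conv_delta_left[OF ix] by simp
  next
    case True
    then obtain z y where zy: "z \<in> carrier F" "y \<in> carrier H" "g = \<iota> z \<otimes>\<^bsub>G\<^esub> \<sigma> y" "decomp g = (z, y)"
      by (rule decompose)
    have "inv\<^bsub>G\<^esub> \<iota> x \<otimes>\<^bsub>G\<^esub> g = \<iota> (inv\<^bsub>F\<^esub> x \<otimes>\<^bsub>F\<^esub> z) \<otimes>\<^bsub>G\<^esub> \<sigma> y"
      using x zy by (simp add: G.m_assoc)
    then have "decomp (inv\<^bsub>G\<^esub> \<iota> x \<otimes>\<^bsub>G\<^esub> g) = (inv\<^bsub>F\<^esub> x \<otimes>\<^bsub>F\<^esub> z, y)"
      using x zy decomp_eq[of "inv\<^bsub>F\<^esub> x \<otimes>\<^bsub>F\<^esub> z" y] by simp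
    then show ?thesis
      unfolding Phi_eq iota.alg_map_delta[OF x] G.conv_delta_left[OF ix] tens_lact_def F.conv_delta_left[OF x]
      using True ix zy by simp
  qed
qed

lemma Phi_tens_lact:
  fixes c :: "'f \<times> 'h \<Rightarrow> 'k::comm_ring_1"
  assumes a: "a \<in> grp_alg F"
  shows "Phi F H G \<iota> \<sigma> (tens_lact F a c) = conv G (alg_map F \<iota> a) (Phi F H G \<iota> \<sigma> c)"
proof (rule linear_eq_on_grp_alg[where f = "\<lambda>u. Phi F H G \<iota> \<sigma> (tens_lact F u c)"
      and g = "\<lambda>u. conv G (alg_map F \<iota> u) (Phi F H G \<iota> \<sigma> c)", OF _ _ Phi_tens_lact_delta a])
  show "k_linear_on (grp_alg F) (\<lambda>u. Phi F H G \<iota> \<sigma> (tens_lact F u c))"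
  proof (rule k_linear_onI)
    fix u w :: "'f \<Rightarrow> 'k" and k assume "u \<in> grp_alg F" "w \<in> grp_alg F"
    then have "tens_lact F (lincomb k u w) c = lincomb k (tens_lact F u c) (tens_lact F w c)"
      unfolding tens_lact_def by (simp add: fun_eq_iff F.conv_lincomb_left)
    then show "Phi F H G \<iota> \<sigma> (tens_lact F (lincomb k u w) c)
        = lincomb k (Phi F H G \<iota> \<sigma> (tens_lact F u c)) (Phi F H G \<iota> \<sigma> (tens_lact F w c))"
      by (simp only: Phi_lincomb)
  qed
  show "k_linear_on (grp_alg F) (\<lambda>u. conv G (alg_map F \<iota> u) (Phi F H G \<iota> \<sigma> c))"
    using iota.alg_map_closed
    by (intro k_linear_on_comp[where W = "grp_alg G", OF iota.k_linear_on_alg_map _ G.k_linear_on_conv_left])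
qed

abbreviation \<Theta> :: "'h \<Rightarrow> 'f \<Rightarrow> 'f" where
  "\<Theta> h \<equiv> Theta F G \<iota> \<sigma> h"

lemma Theta_closed_iota_Theta:
  assumes h: "h \<in> carrier H" and x: "x \<in> carrier F"
  shows "\<Theta> h x \<in> carrier F" "\<iota> (\<Theta> h x) = \<sigma> h \<otimes>\<^bsub>G\<^esub> \<iota> x \<otimes>\<^bsub>G\<^esub> inv\<^bsub>G\<^esub> \<sigma> h"
proof -
  let ?z = "\<sigma> h \<otimes>\<^bsub>G\<^esub> \<iota> x \<otimes>\<^bsub>G\<^esub> inv\<^bsub>G\<^esub> \<sigma> h"
  have "\<pi> ?z = h \<otimes>\<^bsub>H\<^esub> \<one>\<^bsub>H\<^esub> \<otimes>\<^bsub>H\<^esub> inv\<^bsub>H\<^esub> h"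
    using h x pi_sigma pi_iota by simp
  then have "\<pi> ?z = \<one>\<^bsub>H\<^esub>" using h by simp
  moreover have "?z \<in> carrier G" using h x by simp
  ultimately show "\<Theta> h x \<in> carrier F" "\<iota> (\<Theta> h x) = ?z"
    unfolding Theta_def using iota_inv_into by blast+
qed

lemma group_hom_Theta:
  assumes h: "h \<in> carrier H"
  shows "group_hom F F (\<Theta> h)"
proof -
  have "\<Theta> h \<in> hom F F"
  proof (rule homI)
    fix x y assume xy: "x \<in> carrier F" "y \<in> carrier F"
    then have "\<iota> (\<Theta> h (x \<otimes>\<^bsub>F\<^esub> y)) = \<iota> (\<Theta> h x \<otimes>\<^bsub>F\<^esub> \<Theta> h y)"
      using h by (simp add: Theta_closed_iota_Theta G.m_assoc G.inv_mult_cancel_left)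
    then show "\<Theta> h (x \<otimes>\<^bsub>F\<^esub> y) = \<Theta> h x \<otimes>\<^bsub>F\<^esub> \<Theta> h y"
      using inj_onD[OF iota_inj] h xy by (simp add: Theta_closed_iota_Theta)
  qed (use h Theta_closed_iota_Theta in blast)
  then show ?thesis by unfold_locales
qed

lemma delta_sigma_conv_iota:
  fixes z :: "'f \<Rightarrow> 'k::comm_ring_1"
  assumes h: "h \<in> carrier H" and z: "z \<in> grp_alg F"
  shows "conv G (delta (\<sigma> h)) (alg_map F \<iota> z) = conv G (alg_map F \<iota> (alg_map F (\<Theta> h) z)) (delta (\<sigma> h))"
proof -
  interpret Theta: group_hom F F "\<Theta> h" by (rule group_hom_Theta[OF h])
  have sh: "\<sigma> h \<in> carrier G" using h by simp
  show ?thesis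
  proof (rule linear_eq_on_grp_alg[where f = "\<lambda>z. conv G (delta (\<sigma> h)) (alg_map F \<iota> z)"
        and g = "\<lambda>z. conv G (alg_map F \<iota> (alg_map F (\<Theta> h) z)) (delta (\<sigma> h))", OF _ _ _ z])
    show "k_linear_on (grp_alg F) (\<lambda>z. conv G (delta (\<sigma> h)) (alg_map F \<iota> z :: 'g \<Rightarrow> 'k))"
      by (intro k_linear_on_comp[where W = UNIV, OF iota.k_linear_on_alg_map _
            G.k_linear_on_conv_right[OF delta_grp_alg[OF sh]]]) simp
    have "k_linear_on (grp_alg F) (\<lambda>z. alg_map F \<iota> (alg_map F (\<Theta> h) z) :: 'g \<Rightarrow> 'k)"
      using Theta.alg_map_closed
      by (intro k_linear_on_comp[where W = "grp_alg F", OF Theta.k_linear_on_alg_map _ iota.k_linear_on_alg_map])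
    then show "k_linear_on (grp_alg F) (\<lambda>z. conv G (alg_map F \<iota> (alg_map F (\<Theta> h) z)) (delta (\<sigma> h)) :: 'g \<Rightarrow> 'k)"
      using iota.alg_map_closed[OF Theta.alg_map_closed]
      by (intro k_linear_on_comp[where W = "grp_alg G", OF _ _ G.k_linear_on_conv_left])
  next
    fix x assume x: "x \<in> carrier F"
    have "\<iota> (\<Theta> h x) \<otimes>\<^bsub>G\<^esub> \<sigma> h = \<sigma> h \<otimes>\<^bsub>G\<^esub> \<iota> x"
      using sh x h by (simp add: Theta_closed_iota_Theta G.m_assoc)
    then show "conv G (delta (\<sigma> h)) (alg_map F \<iota> (delta x))
        = conv G (alg_map F \<iota> (alg_map F (\<Theta> h) (delta x))) (delta (\<sigma> h) :: 'g \<Rightarrow> 'k)"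
      using sh x h by (simp add: Theta.alg_map_delta iota.alg_map_delta Theta_closed_iota_Theta(1)
          G.conv_delta_delta)
  qed
qed

definition filtration_image :: "nat \<Rightarrow> ('g \<Rightarrow> 'k::comm_ring_1) set" where
  "filtration_image n = kspan {conv G (alg_map F \<iota> x) (alg_map H \<sigma> y) | a x y.
      a \<le> n \<and> x \<in> aug_pow F a \<and> y \<in> aug_pow H (n - a)}"

lemma filtration_image_memI:
  fixes x :: "'f \<Rightarrow> 'k::comm_ring_1" and y :: "'h \<Rightarrow> 'k"
  assumes x: "x \<in> aug_pow F a" and y: "y \<in> aug_pow H b" and n: "n \<le> a + b"
  shows "conv G (alg_map F \<iota> x) (alg_map H \<sigma> y) \<in> filtration_image n"
proof -
  have "x \<in> aug_pow F (min a n)" using F.aug_pow_antimono[of "min a n" a] x by auto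
  moreover have "n - min a n \<le> b" using n by auto
  then have "y \<in> aug_pow H (n - min a n)" using H.aug_pow_antimono y by blast
  ultimately show ?thesis
    unfolding filtration_image_def
    by (intro kspan_superset CollectI exI[of _ "min a n"] exI[of _ x] exI[of _ y]) auto
qed

lemma k_subspace_filtration_image: "k_subspace (filtration_image n :: ('g \<Rightarrow> 'k::comm_ring_1) set)"
  unfolding filtration_image_def by (rule k_subspace_kspan)

lemma filtration_image_subset_aug_pow: "filtration_image n \<subseteq> (aug_pow G n :: ('g \<Rightarrow> 'k::comm_ring_1) set)"
  unfolding filtration_image_def
proof (rule kspan_minimal[OF G.k_subspace_aug_pow], safe)
  fix a and x :: "'f \<Rightarrow> 'k" and y :: "'h \<Rightarrow> 'k"
  assume "a \<le> n" "x \<in> aug_pow F a" "y \<in> aug_pow H (n - a)"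
  then show "conv G (alg_map F \<iota> x) (alg_map H \<sigma> y) \<in> aug_pow G n"
    using G.aug_pow_conv[OF iota.alg_map_aug_pow sigma.alg_map_aug_pow] by fastforce
qed

lemma filtration_image_linear_into:
  fixes f :: "('g \<Rightarrow> 'k::comm_ring_1) \<Rightarrow> 'c \<Rightarrow> 'k"
  assumes f: "k_linear_on (grp_alg G) f" and W: "k_subspace W"
    and gen: "\<And>a x y. a \<le> n \<Longrightarrow> x \<in> aug_pow F a \<Longrightarrow> y \<in> aug_pow H (n - a)
      \<Longrightarrow> f (conv G (alg_map F \<iota> x) (alg_map H \<sigma> y)) \<in> W"
    and u: "u \<in> filtration_image n"
  shows "f u \<in> W"
proof (rule kspan_linear_into[OF f _ W])
  show "kspan {conv G (alg_map F \<iota> x) (alg_map H \<sigma> y) | a x y.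
      a \<le> n \<and> x \<in> aug_pow F a \<and> y \<in> aug_pow H (n - a)} \<subseteq> (grp_alg G :: ('g \<Rightarrow> 'k) set)"
    using filtration_image_subset_aug_pow G.aug_pow_subset_grp_alg
    unfolding filtration_image_def by blast
  show "u \<in> kspan {conv G (alg_map F \<iota> x) (alg_map H \<sigma> y) | a x y.
      a \<le> n \<and> x \<in> aug_pow F a \<and> y \<in> aug_pow H (n - a)}"
    using u unfolding filtration_image_def .
qed (use gen in blast)

lemma filtration_image_conv_sigma:
  fixes u :: "'g \<Rightarrow> 'k::comm_ring_1"
  assumes u: "u \<in> filtration_image n" and y: "y \<in> aug_pow H b"
  shows "conv G u (alg_map H \<sigma> y) \<in> filtration_image (n + b)"
proof (rule filtration_image_linear_into[OF G.k_linear_on_conv_left k_subspace_filtration_image _ u])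
  fix a and x :: "'f \<Rightarrow> 'k" and y' :: "'h \<Rightarrow> 'k"
  assume a: "a \<le> n" and x: "x \<in> aug_pow F a" and y': "y' \<in> aug_pow H (n - a)"
  have x': "x \<in> grp_alg F" and y'': "y' \<in> grp_alg H" and y''': "y \<in> grp_alg H"
    using x y' y F.aug_pow_subset_grp_alg H.aug_pow_subset_grp_alg by blast+
  then have "conv G (conv G (alg_map F \<iota> x) (alg_map H \<sigma> y')) (alg_map H \<sigma> y)
      = conv G (alg_map F \<iota> x) (alg_map H \<sigma> (conv H y' y))"
    by (simp add: G.conv_assoc iota.alg_map_closed sigma.alg_map_closed sigma.alg_map_conv)
  moreover have "conv H y' y \<in> aug_pow H (n - a + b)" by (rule H.aug_pow_conv[OF y' y])
  ultimately show "conv G (conv G (alg_map F \<iota> x) (alg_map H \<sigma> y')) (alg_map H \<sigma> y)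
      \<in> filtration_image (n + b)"
    using filtration_image_memI[OF x] a by simp
qed

lemma sigma_minus_one_conv_iota:
  fixes z :: "'f \<Rightarrow> 'k::comm_ring_1"
  assumes h: "h \<in> carrier H" and z: "z \<in> grp_alg F"
  shows "conv G (delta_diff (\<sigma> h) \<one>\<^bsub>G\<^esub>) (alg_map F \<iota> z)
    = (\<lambda>i. conv G (alg_map F \<iota> (alg_map F (\<Theta> h) z)) (delta_diff (\<sigma> h) \<one>\<^bsub>G\<^esub>) i
           + alg_map F \<iota> (\<lambda>j. alg_map F (\<Theta> h) z j - z j) i)"
proof -
  interpret Theta: group_hom F F "\<Theta> h" by (rule group_hom_Theta[OF h])
  have Tz: "alg_map F (\<Theta> h) z \<in> grp_alg F" by (rule Theta.alg_map_closed[OF z])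
  have sh: "\<sigma> h \<in> carrier G" using h by simp
  have iz: "alg_map F \<iota> z \<in> grp_alg G" and iTz: "alg_map F \<iota> (alg_map F (\<Theta> h) z) \<in> grp_alg G"
    using iota.alg_map_closed z Tz by blast+
  have "conv G (delta_diff (\<sigma> h) \<one>\<^bsub>G\<^esub>) (alg_map F \<iota> z)
      = (\<lambda>i. conv G (delta (\<sigma> h)) (alg_map F \<iota> z) i - conv G (delta \<one>\<^bsub>G\<^esub>) (alg_map F \<iota> z) i)"
    using sh by (intro G.conv_diff_left delta_grp_alg) simp_all
  also have "\<dots> = (\<lambda>i. conv G (alg_map F \<iota> (alg_map F (\<Theta> h) z)) (delta (\<sigma> h)) i - alg_map F \<iota> z i)"
    by (simp only: delta_sigma_conv_iota[OF h z] G.conv_one_left[OF iz])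
  also have "\<dots> = (\<lambda>i. conv G (alg_map F \<iota> (alg_map F (\<Theta> h) z)) (delta_diff (\<sigma> h) \<one>\<^bsub>G\<^esub>) i
           + alg_map F \<iota> (\<lambda>j. alg_map F (\<Theta> h) z j - z j) i)"
    by (simp add: G.conv_diff_right[OF iTz] G.conv_one_right[OF iTz] iota.alg_map_diff[OF Tz z])
  finally show ?thesis .
qed

lemma k_linear_on_iota_sigma_iota:
  fixes x z :: "'f \<Rightarrow> 'k::comm_ring_1"
  assumes x: "x \<in> grp_alg F"
  shows "k_linear_on (grp_alg H) (\<lambda>y. conv G (conv G (alg_map F \<iota> x) (alg_map H \<sigma> y)) (alg_map F \<iota> z))"
proof -
  have ix: "alg_map F \<iota> x \<in> grp_alg G" by (rule iota.alg_map_closed[OF x])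
  have "k_linear_on (grp_alg H) (\<lambda>y. conv G (alg_map F \<iota> x) (alg_map H \<sigma> y) :: 'g \<Rightarrow> 'k)"
    by (intro k_linear_on_comp[where W = UNIV, OF sigma.k_linear_on_alg_map _ G.k_linear_on_conv_right[OF ix]])
      simp
  then show ?thesis
    using G.conv_closed[OF ix sigma.alg_map_closed]
    by (intro k_linear_on_comp[where W = "grp_alg G", OF _ _ G.k_linear_on_conv_left])
qed

lemma kspan_tens_aug_pow_subset_tens_space:
  "kspan (\<Union>a \<in> {..n}. {tens x y | x y. x \<in> (aug_pow F a :: ('f \<Rightarrow> 'k::comm_ring_1) set)
                                 \<and> y \<in> (aug_pow H (n - a) :: ('h \<Rightarrow> 'k) set)})
    \<subseteq> tens_space F H"
proof (rule kspan_minimal[OF k_subspace_fsupp[of "carrier F \<times> carrier H", folded tens_space_def]])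
  show "(\<Union>a \<in> {..n}. {tens x y | x y. x \<in> (aug_pow F a :: ('f \<Rightarrow> 'k) set) \<and> y \<in> aug_pow H (n - a)})
      \<subseteq> tens_space F H"
    using F.aug_pow_subset_grp_alg H.aug_pow_subset_grp_alg by (blast intro: tens_in_tens_space)
qed

lemma Phi_image_kspan_tens_aug_pow:
  "Phi F H G \<iota> \<sigma> ` kspan (\<Union>a \<in> {..n}. {tens x y | x y. x \<in> (aug_pow F a :: ('f \<Rightarrow> 'k::comm_ring_1) set)
                                                 \<and> y \<in> (aug_pow H (n - a) :: ('h \<Rightarrow> 'k) set)})
    = filtration_image n"
  (is "_ ` kspan ?S = _")
proof -
  have image: "Phi F H G \<iota> \<sigma> ` ?S = {conv G (alg_map F \<iota> x) (alg_map H \<sigma> y) | a x y.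
      a \<le> n \<and> x \<in> aug_pow F a \<and> y \<in> aug_pow H (n - a)}"
  proof (rule equalityI; rule subsetI)
    fix w :: "'g \<Rightarrow> 'k" assume "w \<in> Phi F H G \<iota> \<sigma> ` ?S"
    then obtain a x y where w: "w = Phi F H G \<iota> \<sigma> (tens x y)" "a \<le> n"
      "x \<in> aug_pow F a" "y \<in> aug_pow H (n - a)"
      by blast
    moreover from this have "x \<in> grp_alg F" "y \<in> grp_alg H"
      using F.aug_pow_subset_grp_alg H.aug_pow_subset_grp_alg by blast+
    ultimately show "w \<in> {conv G (alg_map F \<iota> x) (alg_map H \<sigma> y) | a x y.
        a \<le> n \<and> x \<in> aug_pow F a \<and> y \<in> aug_pow H (n - a)}"
      by (auto simp: Phi_tens)
  next
    fix w :: "'g \<Rightarrow> 'k" assume "w \<in> {conv G (alg_map F \<iota> x) (alg_map H \<sigma> y) | a x y.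
        a \<le> n \<and> x \<in> aug_pow F a \<and> y \<in> aug_pow H (n - a)}"
    then obtain a x y where w: "w = conv G (alg_map F \<iota> x) (alg_map H \<sigma> y)" "a \<le> n"
      "x \<in> aug_pow F a" "y \<in> aug_pow H (n - a)"
      by blast
    moreover from this have "x \<in> grp_alg F" "y \<in> grp_alg H"
      using F.aug_pow_subset_grp_alg H.aug_pow_subset_grp_alg by blast+
    ultimately have "w = Phi F H G \<iota> \<sigma> (tens x y)" by (simp add: Phi_tens)
    moreover have "tens x y \<in> ?S" using w by blast
    ultimately show "w \<in> Phi F H G \<iota> \<sigma> ` ?S" by blast
  qed
  have "Phi F H G \<iota> \<sigma> ` kspan ?S = kspan (Phi F H G \<iota> \<sigma> ` ?S)"
    by (rule kspan_linear_image[OF k_linear_on_Phi subset_UNIV])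
  then show ?thesis unfolding image filtration_image_def .
qed

end

section \<open>Trivial action on the abelianization\<close>

locale ab_trivial_split_extension = split_extension F G H \<iota> \<pi> \<sigma>
  for F :: "('f, 'x) monoid_scheme" and G :: "('g, 'y) monoid_scheme" and H :: "('h, 'z) monoid_scheme"
    and \<iota> :: "'f \<Rightarrow> 'g" and \<pi> :: "'g \<Rightarrow> 'h" and \<sigma> :: "'h \<Rightarrow> 'g" +
  assumes Theta_ab: "\<And>h. h \<in> carrier H \<Longrightarrow> Theta_ab_id F G \<iota> \<sigma> h"
begin

lemma Theta_mult_inv_derived:
  assumes h: "h \<in> carrier H" and x: "x \<in> carrier F"
  shows "\<Theta> h x \<otimes>\<^bsub>F\<^esub> inv\<^bsub>F\<^esub> x \<in> derived F (carrier F)"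
proof -
  let ?D = "derived F (carrier F)"
  have D: "subgroup ?D F" by (rule F.derived_is_subgroup) simp
  have t: "\<Theta> h x \<in> carrier F" using h x by (rule Theta_closed_iota_Theta)
  have "\<Theta> h x \<in> ?D #>\<^bsub>F\<^esub> \<Theta> h x"
    using t subgroup.one_closed[OF D] unfolding r_coset_def by force
  then have "\<Theta> h x \<in> ?D #>\<^bsub>F\<^esub> x"
    using Theta_ab[OF h] x unfolding Theta_ab_id_def by blast
  then obtain d where d: "d \<in> ?D" "\<Theta> h x = d \<otimes>\<^bsub>F\<^esub> x" unfolding r_coset_def by blast
  moreover have "d \<in> carrier F" using subgroup.mem_carrier[OF D d(1)] .
  ultimately show ?thesis using x by (simp add: F.m_assoc)
qed

lemma Theta_delta_diff_aug_pow_two: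
  assumes h: "h \<in> carrier H" and x: "x \<in> carrier F"
  shows "(delta_diff (\<Theta> h x) x :: 'f \<Rightarrow> 'k::comm_ring_1) \<in> aug_pow F 2"
proof -
  let ?c = "\<Theta> h x \<otimes>\<^bsub>F\<^esub> inv\<^bsub>F\<^esub> x"
  have c: "?c \<in> carrier F" and t: "\<Theta> h x \<in> carrier F"
    using h x Theta_closed_iota_Theta by auto
  \<comment> \<open>\<open>\<Theta>\<^sub>h x - x = (c - 1) x\<close> with \<open>c \<in> [F, F]\<close>\<close>
  have "conv F (delta_diff ?c \<one>\<^bsub>F\<^esub> :: 'f \<Rightarrow> 'k) (delta x) \<in> aug_pow F 2"
    using F.derived_delta_diff_aug_pow_two[OF Theta_mult_inv_derived[OF h x]] x
    by (blast intro: F.aug_pow_conv_right delta_grp_alg)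
  then show ?thesis using c x t by (simp add: F.conv_delta_diff_one_delta F.m_assoc)
qed

lemma Theta_minus_id_aug_ideal:
  fixes b :: "'f \<Rightarrow> 'k::comm_ring_1"
  assumes h: "h \<in> carrier H" and b: "b \<in> aug_ideal F"
  shows "(\<lambda>i. alg_map F (\<Theta> h) b i - b i) \<in> aug_pow F 2"
proof -
  interpret Theta: group_hom F F "\<Theta> h" by (rule group_hom_Theta[OF h])
  show ?thesis
  proof (rule F.aug_ideal_linear_into[where f = "\<lambda>b i. alg_map F (\<Theta> h) b i - b i",
        OF _ F.k_subspace_aug_pow _ b])
    show "k_linear_on (grp_alg F) (\<lambda>b i. alg_map F (\<Theta> h) b i - b i :: 'k)"
      by (rule k_linear_on_diff[OF Theta.k_linear_on_alg_map k_linear_on_id])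
    fix g assume g: "g \<in> carrier F"
    then show "(\<lambda>i. alg_map F (\<Theta> h) (delta_diff g \<one>\<^bsub>F\<^esub>) i - delta_diff g \<one>\<^bsub>F\<^esub> i :: 'k) \<in> aug_pow F 2"
      using k_subspace_diff[OF F.k_subspace_aug_pow Theta_delta_diff_aug_pow_two[OF h g]
          Theta_delta_diff_aug_pow_two[OF h F.one_closed]]
      by (simp add: Theta.alg_map_delta_diff fun_eq_iff algebra_simps)
  qed
qed

lemma Theta_minus_id_aug_pow:
  fixes z :: "'f \<Rightarrow> 'k::comm_ring_1"
  assumes h: "h \<in> carrier H" and z: "z \<in> aug_pow F r"
  shows "(\<lambda>i. alg_map F (\<Theta> h) z i - z i) \<in> aug_pow F (Suc r)"
proof -
  interpret Theta: group_hom F F "\<Theta> h" by (rule group_hom_Theta[OF h])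
  let ?T = "alg_map F (\<Theta> h)"
  have lin: "k_linear_on (grp_alg F) (\<lambda>b i. ?T b i - b i :: 'k)"
    by (rule k_linear_on_diff[OF Theta.k_linear_on_alg_map k_linear_on_id])
  show ?thesis
    using z
  proof (induction r arbitrary: z)
    case 0
    show ?case
    proof (rule grp_alg_linear_into[OF lin F.k_subspace_aug_pow])
      show "z \<in> grp_alg F" using 0 by simp
      fix x assume x: "x \<in> carrier F"
      then have "(delta_diff (\<Theta> h x) x :: 'f \<Rightarrow> 'k) \<in> aug_pow F (Suc 0)"
        using Theta_delta_diff_aug_pow_two[OF h x] F.aug_pow_antimono[of "Suc 0" 2] by auto
      then show "(\<lambda>i. ?T (delta x) i - delta x i :: 'k) \<in> aug_pow F (Suc 0)"
        using x by (simp add: Theta.alg_map_delta)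
    qed
  next
    case (Suc r)
    show ?case
    proof (rule F.aug_pow_Suc_linear_into[OF lin F.k_subspace_aug_pow _ Suc.prems])
      fix a b :: "'f \<Rightarrow> 'k" assume a: "a \<in> aug_pow F r" and b: "b \<in> aug_ideal F"
      have "a \<in> grp_alg F" "b \<in> grp_alg F"
        using a b F.aug_pow_subset_grp_alg F.aug_ideal_subset_grp_alg by blast+
      then have "(\<lambda>i. ?T (conv F a b) i - conv F a b i)
          = (\<lambda>i. conv F (\<lambda>j. ?T a j - a j) (?T b) i + conv F a (\<lambda>j. ?T b j - b j) i)"
        by (rule alg_map_minus_id_conv[OF group_hom_Theta[OF h]])
      moreover have "conv F (\<lambda>j. ?T a j - a j) (?T b) \<in> aug_pow F (Suc r + 1)"
        using Theta.alg_map_aug_ideal[OF b] F.aug_ideal_subset_aug_pow_one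
        by (blast intro: F.aug_pow_conv Suc.IH[OF a])
      moreover have "conv F a (\<lambda>j. ?T b j - b j) \<in> aug_pow F (r + 2)"
        by (rule F.aug_pow_conv[OF a Theta_minus_id_aug_ideal[OF h b]])
      ultimately show "(\<lambda>i. ?T (conv F a b) i - conv F a b i) \<in> aug_pow F (Suc (Suc r))"
        using k_subspace_add[OF F.k_subspace_aug_pow] by simp
    qed
  qed
qed

lemma filtration_image_iota_sigma_delta_iota:
  fixes x z :: "'f \<Rightarrow> 'k::comm_ring_1"
  assumes x: "x \<in> aug_pow F a" and h: "h \<in> carrier H" and z: "z \<in> aug_pow F r"
  shows "conv G (conv G (alg_map F \<iota> x) (alg_map H \<sigma> (delta h))) (alg_map F \<iota> z) \<in> filtration_image (a + r)"
proof -
  interpret Theta: group_hom F F "\<Theta> h" by (rule group_hom_Theta[OF h])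
  have x': "x \<in> grp_alg F" and z': "z \<in> grp_alg F"
    using x z F.aug_pow_subset_grp_alg by blast+
  have Tz: "alg_map F (\<Theta> h) z \<in> grp_alg F" by (rule Theta.alg_map_closed[OF z'])
  have sh: "delta (\<sigma> h) \<in> (grp_alg G :: ('g \<Rightarrow> 'k) set)" using h by (simp add: delta_grp_alg)
  have "conv G (conv G (alg_map F \<iota> x) (alg_map H \<sigma> (delta h))) (alg_map F \<iota> z)
      = conv G (alg_map F \<iota> x) (conv G (delta (\<sigma> h)) (alg_map F \<iota> z))"
    using h sh by (simp add: sigma.alg_map_delta G.conv_assoc iota.alg_map_closed[OF x'])
  also have "\<dots> = conv G (conv G (alg_map F \<iota> x) (alg_map F \<iota> (alg_map F (\<Theta> h) z))) (delta (\<sigma> h))"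
    using x' Tz by (simp add: delta_sigma_conv_iota[OF h z'] G.conv_assoc iota.alg_map_closed)
  also have "\<dots> = conv G (alg_map F \<iota> (conv F x (alg_map F (\<Theta> h) z))) (alg_map H \<sigma> (delta h))"
    using x' Tz h by (simp add: iota.alg_map_conv sigma.alg_map_delta)
  finally show ?thesis
    using filtration_image_memI[OF F.aug_pow_conv[OF x Theta.alg_map_aug_pow[OF z]], of "delta h" 0]
      h by (simp add: delta_grp_alg)
qed

lemma iota_sigma_delta_diff_iota_eq:
  fixes x z :: "'f \<Rightarrow> 'k::comm_ring_1" and y :: "'h \<Rightarrow> 'k"
  assumes x: "x \<in> aug_pow F a" and y: "y \<in> grp_alg H" and h: "h \<in> carrier H" and z: "z \<in> grp_alg F"
  shows "conv G (conv G (alg_map F \<iota> x) (alg_map H \<sigma> (conv H y (delta_diff h \<one>\<^bsub>H\<^esub>)))) (alg_map F \<iota> z)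
    = (\<lambda>i. conv G (conv G (conv G (alg_map F \<iota> x) (alg_map H \<sigma> y)) (alg_map F \<iota> (alg_map F (\<Theta> h) z)))
              (alg_map H \<sigma> (delta_diff h \<one>\<^bsub>H\<^esub>)) i
         + conv G (conv G (alg_map F \<iota> x) (alg_map H \<sigma> y)) (alg_map F \<iota> (\<lambda>j. alg_map F (\<Theta> h) z j - z j)) i)"
    (is "_ = ?rhs")
proof -
  interpret Theta: group_hom F F "\<Theta> h" by (rule group_hom_Theta[OF h])
  let ?A = "conv G (alg_map F \<iota> x) (alg_map H \<sigma> y)"
  have x': "x \<in> grp_alg F" using x F.aug_pow_subset_grp_alg by blast
  have A: "?A \<in> grp_alg G" using x' y by (simp add: G.conv_closed iota.alg_map_closed sigma.alg_map_closed)
  have Tz: "alg_map F (\<Theta> h) z \<in> grp_alg F" by (rule Theta.alg_map_closed[OF z])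
  have gen: "delta_diff (\<sigma> h) \<one>\<^bsub>G\<^esub> \<in> (grp_alg G :: ('g \<Rightarrow> 'k) set)" using h by (simp add: delta_diff_grp_alg)
  have sigma_gen: "alg_map H \<sigma> (delta_diff h \<one>\<^bsub>H\<^esub>) = (delta_diff (\<sigma> h) \<one>\<^bsub>G\<^esub> :: 'g \<Rightarrow> 'k)"
    using h by (simp add: sigma.alg_map_delta_diff)
  have "conv G (conv G (alg_map F \<iota> x) (alg_map H \<sigma> (conv H y (delta_diff h \<one>\<^bsub>H\<^esub>)))) (alg_map F \<iota> z)
      = conv G ?A (conv G (delta_diff (\<sigma> h) \<one>\<^bsub>G\<^esub>) (alg_map F \<iota> z))"
    using x' y h gen sigma_gen
    by (simp add: sigma.alg_map_conv delta_diff_grp_alg G.conv_assoc G.conv_closed iota.alg_map_closed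
        sigma.alg_map_closed)
  also have "\<dots> = ?rhs"
    unfolding sigma_minus_one_conv_iota[OF h z] G.conv_add_right[OF A] sigma_gen
    using A Tz by (simp add: G.conv_assoc iota.alg_map_closed)
  finally show ?thesis .
qed

lemma filtration_image_iota_sigma_delta_diff_iota:
  fixes x z :: "'f \<Rightarrow> 'k::comm_ring_1" and y :: "'h \<Rightarrow> 'k"
  assumes x: "x \<in> aug_pow F a" and y: "y \<in> grp_alg H" and h: "h \<in> carrier H" and z: "z \<in> grp_alg F"
    and Theta_z: "conv G (conv G (alg_map F \<iota> x) (alg_map H \<sigma> y)) (alg_map F \<iota> (alg_map F (\<Theta> h) z))
      \<in> filtration_image m"
    and Theta_z_minus_z: "conv G (conv G (alg_map F \<iota> x) (alg_map H \<sigma> y))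
      (alg_map F \<iota> (\<lambda>j. alg_map F (\<Theta> h) z j - z j)) \<in> filtration_image (Suc m)"
  shows "conv G (conv G (alg_map F \<iota> x) (alg_map H \<sigma> (conv H y (delta_diff h \<one>\<^bsub>H\<^esub>)))) (alg_map F \<iota> z)
    \<in> filtration_image (Suc m)"
proof -
  have "conv G (conv G (conv G (alg_map F \<iota> x) (alg_map H \<sigma> y)) (alg_map F \<iota> (alg_map F (\<Theta> h) z)))
      (alg_map H \<sigma> (delta_diff h \<one>\<^bsub>H\<^esub>)) \<in> filtration_image (m + 1)"
    using Theta_z h by (intro filtration_image_conv_sigma subsetD[OF H.aug_ideal_subset_aug_pow_one]
        H.delta_diff_one_aug_ideal)
  then show ?thesis
    unfolding iota_sigma_delta_diff_iota_eq[OF x y h z]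
    using k_subspace_add[OF k_subspace_filtration_image] Theta_z_minus_z by simp
qed

lemma filtration_image_iota_sigma_iota:
  fixes x z :: "'f \<Rightarrow> 'k::comm_ring_1" and y :: "'h \<Rightarrow> 'k"
  assumes x: "x \<in> aug_pow F a" and y: "y \<in> aug_pow H b" and z: "z \<in> aug_pow F r"
  shows "conv G (conv G (alg_map F \<iota> x) (alg_map H \<sigma> y)) (alg_map F \<iota> z) \<in> filtration_image (a + b + r)"
proof -
  have x': "x \<in> grp_alg F" using x F.aug_pow_subset_grp_alg by blast
  show ?thesis
    using y z
  proof (induction b arbitrary: y r z)
    case 0
    show ?case
      by (rule grp_alg_linear_into[OF k_linear_on_iota_sigma_iota[OF x'] k_subspace_filtration_image])
        (use 0 filtration_image_iota_sigma_delta_iota[OF x] in simp_all)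
  next
    case (Suc b)
    have z': "z \<in> grp_alg F" using Suc.prems(2) F.aug_pow_subset_grp_alg by blast
    show ?case
    proof (rule H.aug_pow_Suc_linear_into[OF k_linear_on_iota_sigma_iota[OF x'] k_subspace_filtration_image
          _ Suc.prems(1)])
      fix y' w :: "'h \<Rightarrow> 'k" assume y': "y' \<in> aug_pow H b" and w: "w \<in> aug_ideal H"
      have y'': "y' \<in> grp_alg H" using y' H.aug_pow_subset_grp_alg by blast
      have "k_linear_on (grp_alg H)
          (\<lambda>w. conv G (conv G (alg_map F \<iota> x) (alg_map H \<sigma> (conv H y' w))) (alg_map F \<iota> z))"
        using H.conv_closed[OF y'']
        by (intro k_linear_on_comp[where W = "grp_alg H", OF H.k_linear_on_conv_right[OF y'']
              _ k_linear_on_iota_sigma_iota[OF x']])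
      then show "conv G (conv G (alg_map F \<iota> x) (alg_map H \<sigma> (conv H y' w))) (alg_map F \<iota> z)
          \<in> filtration_image (a + Suc b + r)"
      proof (rule H.aug_ideal_linear_into[OF _ k_subspace_filtration_image _ w])
        fix h assume h: "h \<in> carrier H"
        interpret Theta: group_hom F F "\<Theta> h" by (rule group_hom_Theta[OF h])
        show "conv G (conv G (alg_map F \<iota> x) (alg_map H \<sigma> (conv H y' (delta_diff h \<one>\<^bsub>H\<^esub>))))
            (alg_map F \<iota> z) \<in> filtration_image (a + Suc b + r)"
          using filtration_image_iota_sigma_delta_diff_iota[OF x y'' h z'
              Suc.IH[OF y' Theta.alg_map_aug_pow[OF Suc.prems(2)]]
              Suc.IH[OF y' Theta_minus_id_aug_pow[OF h Suc.prems(2)], unfolded add_Suc_right]]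
          by simp
      qed
    qed
  qed
qed

lemma filtration_image_conv_iota:
  fixes u :: "'g \<Rightarrow> 'k::comm_ring_1" and z :: "'f \<Rightarrow> 'k"
  assumes u: "u \<in> filtration_image n" and z: "z \<in> aug_pow F r"
  shows "conv G u (alg_map F \<iota> z) \<in> filtration_image (n + r)"
proof (rule filtration_image_linear_into[OF G.k_linear_on_conv_left k_subspace_filtration_image _ u])
  fix a and x :: "'f \<Rightarrow> 'k" and y :: "'h \<Rightarrow> 'k"
  assume "a \<le> n" "x \<in> aug_pow F a" "y \<in> aug_pow H (n - a)"
  then show "conv G (conv G (alg_map F \<iota> x) (alg_map H \<sigma> y)) (alg_map F \<iota> z) \<in> filtration_image (n + r)"
    using filtration_image_iota_sigma_iota[of x a y "n - a" z r] z by simp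
qed

lemma filtration_image_conv_aug_ideal:
  fixes u v :: "'g \<Rightarrow> 'k::comm_ring_1"
  assumes u: "u \<in> filtration_image n" and v: "v \<in> aug_ideal G"
  shows "conv G u v \<in> filtration_image (Suc n)"
proof -
  have u': "u \<in> grp_alg G" using u filtration_image_subset_aug_pow G.aug_pow_subset_grp_alg by blast
  show ?thesis
  proof (rule G.aug_ideal_linear_into[OF G.k_linear_on_conv_right[OF u'] k_subspace_filtration_image _ v])
    fix g assume "g \<in> carrier G"
    then obtain f h where fh: "f \<in> carrier F" "h \<in> carrier H" "g = \<iota> f \<otimes>\<^bsub>G\<^esub> \<sigma> h"
      by (rule decompose)
    have if': "\<iota> f \<in> carrier G" and sh: "\<sigma> h \<in> carrier G" using fh by simp_all
    \<comment> \<open>\<open>\<iota>(f)\<sigma>(h) - 1 = (\<iota>(f) - 1) \<sigma>(h) + (\<sigma>(h) - 1)\<close>\<close>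
    have "conv G u (delta_diff g \<one>\<^bsub>G\<^esub>)
        = (\<lambda>i. conv G (conv G u (alg_map F \<iota> (delta_diff f \<one>\<^bsub>F\<^esub>))) (alg_map H \<sigma> (delta h)) i
             + conv G u (alg_map H \<sigma> (delta_diff h \<one>\<^bsub>H\<^esub>)) i)"
      using fh if' sh u'
      by (simp add: iota.alg_map_delta_diff sigma.alg_map_delta_diff sigma.alg_map_delta G.conv_assoc
          G.conv_delta_diff_one_delta delta_diff_grp_alg G.conv_add_right[symmetric] fun_eq_iff)
    moreover have "conv G (conv G u (alg_map F \<iota> (delta_diff f \<one>\<^bsub>F\<^esub>))) (alg_map H \<sigma> (delta h))
        \<in> filtration_image (n + 1 + 0)"
      using fh by (intro filtration_image_conv_sigma filtration_image_conv_iota[OF u]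
          subsetD[OF F.aug_ideal_subset_aug_pow_one] F.delta_diff_one_aug_ideal) (simp_all add: delta_grp_alg)
    moreover have "conv G u (alg_map H \<sigma> (delta_diff h \<one>\<^bsub>H\<^esub>)) \<in> filtration_image (n + 1)"
      using fh by (intro filtration_image_conv_sigma[OF u] subsetD[OF H.aug_ideal_subset_aug_pow_one]
          H.delta_diff_one_aug_ideal)
    ultimately show "conv G u (delta_diff g \<one>\<^bsub>G\<^esub>) \<in> filtration_image (Suc n)"
      using k_subspace_add[OF k_subspace_filtration_image] by simp
  qed
qed

lemma aug_pow_subset_filtration_image: "aug_pow G n \<subseteq> (filtration_image n :: ('g \<Rightarrow> 'k::comm_ring_1) set)"
proof (induction n)
  case 0
  show ?case
  proof
    fix u :: "'g \<Rightarrow> 'k" assume "u \<in> aug_pow G 0"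
    then have u: "u \<in> grp_alg G" by simp
    show "u \<in> filtration_image 0"
    proof (rule grp_alg_linear_into[OF k_linear_on_id k_subspace_filtration_image _ u])
      fix g assume "g \<in> carrier G"
      then obtain f h where "f \<in> carrier F" "h \<in> carrier H" "g = \<iota> f \<otimes>\<^bsub>G\<^esub> \<sigma> h"
        by (rule decompose)
      then show "delta g \<in> filtration_image 0"
        using filtration_image_memI[of "delta f" 0 "delta h" 0 0]
        by (simp add: delta_grp_alg iota.alg_map_delta sigma.alg_map_delta G.conv_delta_delta)
    qed
  qed
next
  case (Suc n)
  show ?case
  proof
    fix w :: "'g \<Rightarrow> 'k" assume w: "w \<in> aug_pow G (Suc n)"
    show "w \<in> filtration_image (Suc n)"
    proof (rule G.aug_pow_Suc_linear_into[OF k_linear_on_id k_subspace_filtration_image _ w])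
      show "conv G u v \<in> filtration_image (Suc n)" if "u \<in> aug_pow G n" "v \<in> aug_ideal G" for u v :: "'g \<Rightarrow> 'k"
        using that Suc.IH by (blast intro: filtration_image_conv_aug_ideal)
    qed
  qed
qed

lemma filtration_image_eq_aug_pow: "filtration_image n = (aug_pow G n :: ('g \<Rightarrow> 'k::comm_ring_1) set)"
  using filtration_image_subset_aug_pow aug_pow_subset_filtration_image by (rule subset_antisym)

lemma Phi_bij_betw_aug_pow:
  "bij_betw (Phi F H G \<iota> \<sigma>)
     (kspan (\<Union>a \<in> {..n}. {tens x y | x y. x \<in> (aug_pow F a :: ('f \<Rightarrow> 'k::comm_ring_1) set)
                                     \<and> y \<in> (aug_pow H (n - a) :: ('h \<Rightarrow> 'k) set)}))
     (aug_pow G n)"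
  unfolding bij_betw_def filtration_image_eq_aug_pow[symmetric]
  using inj_on_subset[OF Phi_inj kspan_tens_aug_pow_subset_tens_space] Phi_image_kspan_tens_aug_pow by blast

end

theorem propositionC1:
  fixes F :: "'f monoid" and G :: "'g monoid" and H :: "'h monoid"
    and \<iota> :: "'f \<Rightarrow> 'g" and \<pi> :: "'g \<Rightarrow> 'h" and \<sigma> :: "'h \<Rightarrow> 'g"
  assumes k: "Q_algebra TYPE('k::comm_ring_1)"
    and grpF: "group F" and grpG: "group G" and grpH: "group H"
    and iota_hom: "\<iota> \<in> hom F G" and pi_hom: "\<pi> \<in> hom G H" and sigma_hom: "\<sigma> \<in> hom H G"
    and iota_inj: "inj_on \<iota> (carrier F)"
    and exact_G: "\<iota> ` carrier F = kernel G H \<pi>"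
    and pi_surj: "\<pi> ` carrier G = carrier H"
    and split: "\<forall>h \<in> carrier H. \<pi> (\<sigma> h) = h"
  shows
    "bij_betw (Phi F H G \<iota> \<sigma>) (tens_space F H :: ('f \<times> 'h \<Rightarrow> 'k) set) (grp_alg G)
     \<and> (\<forall>c \<in> (tens_space F H :: ('f \<times> 'h \<Rightarrow> 'k) set). \<forall>d \<in> tens_space F H.
          Phi F H G \<iota> \<sigma> (\<lambda>p. c p + d p) = (\<lambda>g. Phi F H G \<iota> \<sigma> c g + Phi F H G \<iota> \<sigma> d g))
     \<and> (\<forall>a \<in> (grp_alg F :: ('f \<Rightarrow> 'k) set). \<forall>c \<in> tens_space F H.
          Phi F H G \<iota> \<sigma> (tens_lact F a c) = conv G (alg_map F \<iota> a) (Phi F H G \<iota> \<sigma> c))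
     \<and> ((\<forall>h \<in> carrier H. Theta_ab_id F G \<iota> \<sigma> h) \<longrightarrow>
          (\<forall>n::nat. bij_betw (Phi F H G \<iota> \<sigma>)
             (kspan (\<Union>a \<in> {..n}. {tens x y | x y. x \<in> (aug_pow F a :: ('f \<Rightarrow> 'k) set)
                                                 \<and> y \<in> (aug_pow H (n - a) :: ('h \<Rightarrow> 'k) set)}))
             (aug_pow G n :: ('g \<Rightarrow> 'k) set)))"
proof -
  interpret split_extension F G H \<iota> \<pi> \<sigma>
    using grpF grpG grpH iota_hom pi_hom sigma_hom iota_inj exact_G split
    by (simp add: split_extension_def split_extension_axioms_def)
  have part_b: "bij_betw (Phi F H G \<iota> \<sigma>)
      (kspan (\<Union>a \<in> {..n}. {tens x y | x y. x \<in> (aug_pow F a :: ('f \<Rightarrow> 'k) set)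
                                          \<and> y \<in> (aug_pow H (n - a) :: ('h \<Rightarrow> 'k) set)}))
      (aug_pow G n :: ('g \<Rightarrow> 'k) set)"
    if "\<forall>h \<in> carrier H. Theta_ab_id F G \<iota> \<sigma> h" for n
  proof -
    interpret ab_trivial_split_extension F G H \<iota> \<pi> \<sigma>
      using that by unfold_locales blast
    show ?thesis by (rule Phi_bij_betw_aug_pow)
  qed
  show ?thesis
    using Phi_bij Phi_add Phi_tens_lact part_b by blast
qed

end
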